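(* Let $\Gamma$ be a reachability-price game on a simple single-clock timed automaton (in the setting described in the context), and let $I_1=[b_1,r]$ and $I_2=[r,e_2]$ be intervals contained in $[0,1]$. Let $\Gamma'_{I_1}=\mathrm{CostConsistent}(\Gamma_{I_1},\mathrm{OptCost}_{\Gamma_{I_2}})$. Then for every location $l$ of $\Gamma$ and every $x\in I_1\cup I_2$, $$\big(\mathrm{OptCost}_{\Gamma'_{I_1}}\oplus\mathrm{OptCost}_{\Gamma_{I_2}}\big)(l,x)=\mathrm{OptCost}_{\Gamma_{I_1\cup I_2}}(l,x),$$ i.e. $\mathrm{OptCost}_{\Gamma_{I_1\cup I_2}}(l,x)$ equals $\mathrm{OptCost}_{\Gamma'_{I_1}}(l,x)$ for $x\in I_1$ and equals $\mathrm{OptCost}_{\Gamma_{I_2}}(l,x)$ for $x\in I_2\setminus I_1$.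
   Context: Setting: a game $\Gamma$ consists of a finite set of locations $L=L^{\mathrm{Min}}\cup L^{\mathrm{Max}}$ (disjoint), goal locations $L^{\mathrm{Goal}}\subseteq L$ each assigned a cost function (continuous, non-increasing, piecewise affine with finitely many pieces, real-valued), an edge set $E\subseteq L\times L$ (all guards true, no resets, discrete transitions have price $0$), an urgency map $\mathrm{urg}:L\to\{0,1\}$ and price rates $\pi:L\to\mathbb{N}$. For an interval $J=[b,e]\subseteq[0,1]$, the restricted game $\Gamma_J$ has states $L\times J$, goal cost functions restricted to $J$, discrete transitions $(l,x)\to(l',x)$ for $(l,l')\in E$ with price $0$, and continuous transitions $(l,x)\xrightarrow{t}(l,x+t)$ for $t>0$, $\mathrm{urg}(l)=0$, $x+t\le e$, with price $\pi(l)t$. Runs are finite or infinite sequences of consecutive transitions, not containing infinitely many consecutive continuous transitions. Strategies of the minimizer (maximizer) map finite runs ending in states with location in $L^{\mathrm{Min}}$ ($L^{\mathrm{Max}}$) to an available transition; $\mathrm{Run}(s,\mu,\chi)$ is the unique resulting run. The cost of a run that first visits a goal location $l$ at state $(l,x)$ after $n$ transitions is (goal cost function of $l$)$(x)$ plus the sum of the prices of the first $n$ transitions, and $\infty$ if no goal location is visited. $\mathrm{OptCost}_{\Gamma_J}(s)=\inf_\mu\sup_\chi\mathrm{Cost}(\mathrm{Run}(s,\mu,\chi))$; it is assumed finite from every state. A location $l$ is non-urgent if $l\notin L^{\mathrm{Goal}}$ and $\mathrm{urg}(l)=0$. Override: for $h:D_1\to\mathbb{R}$, $g:D_2\to\mathbb{R}$,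 $(h\oplus g)(z)=h(z)$ if $z\in D_1$ and $g(z)$ if $z\in D_2\setminus D_1$. $\Gamma[L^{\mathrm{Goal}}\cup l,h]$ denotes the game obtained by adding $l$ (possibly a fresh location) to the goal locations with cost function $h$ (overriding any previous one); $\Gamma[E\cup e]$ adds edge $e$. $\mathrm{CostConsistent}(\Gamma_{I_1},\mathrm{OptCost}_{\Gamma_{I_2}})$, for $I_1=[b_1,r]$, $I_2=[r,e_2]$, is obtained from $\Gamma$ by, for each non-urgent location $l_i$ of $\Gamma$ ($i=1,\dots,k$), adding a fresh goal location $l_i'$ with cost function $x\mapsto\mathrm{OptCost}_{\Gamma_{I_2}}(l_i,r)+(r-x)\pi(l_i)$ and adding the edge $(l_i,l_i')$, and then restricting the resulting game to $I_1$. *)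

theory Defs
  imports "HOL-Analysis.Analysis" "HOL-Library.Extended_Real"
begin

record 'l game =
  Lmin   :: "'l set"
  Lmax   :: "'l set"
  goal   :: "'l \<Rightarrow> (real \<Rightarrow> real) option"  \<comment> \<open>Some f iff l is a goal location with cost function f\<close>
  edges  :: "('l \<times> 'l) set"
  urgent :: "'l \<Rightarrow> bool"
  rate   :: "'l \<Rightarrow> nat"

definition locs :: "('l, 'b) game_scheme \<Rightarrow> 'l set" where
  "locs G = Lmin G \<union> Lmax G"

definition piecewise_affine01 :: "(real \<Rightarrow> real) \<Rightarrow> bool" where
  "piecewise_affine01 f \<longleftrightarrow>
     (\<exists>ps::real list. ps \<noteq> [] \<and> hd ps = 0 \<and> last ps = 1 \<and> sorted ps \<and>
        (\<forall>i. Suc i < length ps \<longrightarrow>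
           (\<exists>a c. \<forall>x\<in>{ps ! i .. ps ! Suc i}. f x = a * x + c)))"

definition simple_game :: "'l game \<Rightarrow> bool" where
  "simple_game G \<longleftrightarrow>
     finite (Lmin G) \<and> finite (Lmax G) \<and> Lmin G \<inter> Lmax G = {} \<and>
     edges G \<subseteq> locs G \<times> locs G \<and>
     (\<forall>l f. goal G l = Some f \<longrightarrow>
        l \<in> locs G \<and> continuous_on {0..1} f \<and> antimono_on {0..1} f \<and> piecewise_affine01 f)"

definition nonurgent :: "'l game \<Rightarrow> 'l \<Rightarrow> bool" where
  "nonurgent G l \<longleftrightarrow> l \<in> locs G \<and> goal G l = None \<and> \<not> urgent G l"

type_synonym 'l state = "'l \<times> real"

definition succ :: "'l game \<Rightarrow> real \<Rightarrow> 'l state \<Rightarrow> 'l state \<Rightarrow> bool" where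
  "succ G e s s' \<longleftrightarrow>
     ((fst s, fst s') \<in> edges G \<and> snd s' = snd s) \<or>
     (\<not> urgent G (fst s) \<and> fst s' = fst s \<and> snd s < snd s' \<and> snd s' \<le> e)"

type_synonym 'l strategy = "'l state list \<Rightarrow> 'l state"

text \<open>A strategy of the player owning locations P picks an available transition
  (given as its target state) whenever one is available.\<close>
definition valid_strat :: "'l game \<Rightarrow> real \<Rightarrow> 'l set \<Rightarrow> 'l strategy \<Rightarrow> bool" where
  "valid_strat G e P \<sigma> \<longleftrightarrow>
     (\<forall>h. h \<noteq> [] \<and> fst (last h) \<in> P \<and> (\<exists>s'. succ G e (last h) s') \<longrightarrow> succ G e (last h) (\<sigma> h))"

text \<open>The history after n steps of the play from s (it stops growing once no transition
  is available, i.e. the run is finite).\<close>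
fun hist :: "'l game \<Rightarrow> real \<Rightarrow> 'l state \<Rightarrow> 'l strategy \<Rightarrow> 'l strategy \<Rightarrow> nat \<Rightarrow> 'l state list" where
  "hist G e s mu chi 0 = [s]"
| "hist G e s mu chi (Suc n) =
     (let h = hist G e s mu chi n; c = last h in
      if \<exists>s'. succ G e c s'
      then h @ [if fst c \<in> Lmin G then mu h else chi h]
      else h)"

definition pos :: "'l game \<Rightarrow> real \<Rightarrow> 'l state \<Rightarrow> 'l strategy \<Rightarrow> 'l strategy \<Rightarrow> nat \<Rightarrow> 'l state" where
  "pos G e s mu chi n = last (hist G e s mu chi n)"

text \<open>The play ends with infinitely many consecutive continuous transitions in a location of P
  (continuous transitions are exactly those that increase the clock).\<close>
definition zeno_tail :: "'l game \<Rightarrow> real \<Rightarrow> 'l state \<Rightarrow> 'l strategy \<Rightarrow> 'l strategy \<Rightarrow> 'l set \<Rightarrow> bool" where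
  "zeno_tail G e s mu chi P \<longleftrightarrow>
     (\<exists>N. fst (pos G e s mu chi N) \<in> P \<and>
          (\<forall>i\<ge>N. snd (pos G e s mu chi i) < snd (pos G e s mu chi (Suc i))))"

definition min_strat :: "'l game \<Rightarrow> real \<Rightarrow> 'l state \<Rightarrow> 'l strategy \<Rightarrow> bool" where
  "min_strat G e s mu \<longleftrightarrow> valid_strat G e (Lmin G) mu \<and>
     (\<forall>chi. valid_strat G e (Lmax G) chi \<longrightarrow> \<not> zeno_tail G e s mu chi (Lmin G))"

definition max_strat :: "'l game \<Rightarrow> real \<Rightarrow> 'l state \<Rightarrow> 'l strategy \<Rightarrow> bool" where
  "max_strat G e s chi \<longleftrightarrow> valid_strat G e (Lmax G) chi \<and>
     (\<forall>mu. valid_strat G e (Lmin G) mu \<longrightarrow> \<not> zeno_tail G e s mu chi (Lmax G))"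

definition cost :: "'l game \<Rightarrow> real \<Rightarrow> 'l state \<Rightarrow> 'l strategy \<Rightarrow> 'l strategy \<Rightarrow> ereal" where
  "cost G e s mu chi =
     (let p = pos G e s mu chi in
      if \<exists>n. goal G (fst (p n)) \<noteq> None then
        (let n = (LEAST n. goal G (fst (p n)) \<noteq> None) in
          ereal (the (goal G (fst (p n))) (snd (p n)) +
                 (\<Sum>i<n. real (rate G (fst (p i))) * (snd (p (Suc i)) - snd (p i)))))
      else \<infinity>)"

text \<open>OptCost of the restricted game \<Gamma>_[b,e] at state s (meaningful for snd s in [b,e]).\<close>
definition OptCost :: "'l game \<Rightarrow> real \<Rightarrow> real \<Rightarrow> 'l state \<Rightarrow> ereal" where
  "OptCost G b e s =
     (INF mu\<in>{mu. min_strat G e s mu}. SUP chi\<in>{chi. max_strat G e s chi}. cost G e s mu chi)"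

definition override :: "'a set \<Rightarrow> ('a \<Rightarrow> 'b) \<Rightarrow> ('a \<Rightarrow> 'b) \<Rightarrow> 'a \<Rightarrow> 'b" where
  "override D1 h g z = (if z \<in> D1 then h z else g z)"

text \<open>CostConsistent(\<Gamma>_[b1,r], OptCost_\<Gamma>_[r,e2]) before restriction to [b1,r]
  (the restriction is applied by evaluating OptCost with interval [b1,r]).
  Original locations are Inl l; the fresh goal location l' of a non-urgent l is Inr l.\<close>
definition cost_consistent :: "'l game \<Rightarrow> real \<Rightarrow> real \<Rightarrow> ('l + 'l) game" where
  "cost_consistent G r e2 =
     \<lparr> Lmin = Inl ` Lmin G \<union> Inr ` {l. nonurgent G l},
       Lmax = Inl ` Lmax G,
       goal = (\<lambda>z. case z of
                  Inl l \<Rightarrow> goal G l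
                | Inr l \<Rightarrow> (if nonurgent G l then
                     Some (\<lambda>x. real_of_ereal (OptCost G r e2 (l, r)) + (r - x) * real (rate G l))
                   else None)),
       edges = (\<lambda>(a, b). (Inl a, Inl b)) ` edges G \<union> {(Inl l, Inr l) | l. nonurgent G l},
       urgent = (\<lambda>z. case z of Inl l \<Rightarrow> urgent G l | Inr l \<Rightarrow> True),
       rate = (\<lambda>z. case z of Inl l \<Rightarrow> rate G l | Inr l \<Rightarrow> 0) \<rparr>"

end

theory Submission
  imports Defs "HOL-Library.Sublist"
begin

(* For x in [r, e2] both sides are OptCost of G on an interval ending at e2 at the same state, and
   OptCost does not depend on the left endpoint.  The content is the equality
   OptCost_G'(l, x) = OptCost_G(l, x) for x <= r, where G' = CostConsistent(G_[b1,r], OptCost_G_[r,e2]).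

   Strategies are translated between the games: a G'-strategy is lowered to G by copying its moves
   and turning an exit to the fresh goal l' into a delay until r; a G-strategy is lifted to G' by
   copying its moves while they stay <= r and exiting instead of delaying beyond r.  Under such
   corresponding strategies both plays coincide (via Inl) until G visits a goal or G' exits at some
   state (l, y); then the G'-cost is the price so far plus (r - y) * rate l + V l, where V l is the
   optimal cost of G at (l, r).  The G-play can be bridged to a play from (l, r), whose cost is
   within epsilon of V l when continued by a near-optimal strategy.  This yields
   OptCost_G' <= OptCost_G (the maximizer continues, Section 8) and OptCost_G <= OptCost_G'
   (the minimizer uses a switching strategy that detects the exit from the history, Sections 9-10). *)

section \<open>Histories of plays\<close>

definition enabled :: "'l game \<Rightarrow> real \<Rightarrow> 'l state \<Rightarrow> bool" where
  "enabled G e c \<longleftrightarrow> (\<exists>q. succ G e c q)"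

abbreviation owner :: "'l game \<Rightarrow> 'l strategy \<Rightarrow> 'l strategy \<Rightarrow> 'l state \<Rightarrow> 'l strategy" where
  "owner G mu chi c \<equiv> (if fst c \<in> Lmin G then mu else chi)"

lemma hist_Suc':
  "hist G e s mu chi (Suc n) =
    (if enabled G e (pos G e s mu chi n)
     then hist G e s mu chi n @ [owner G mu chi (pos G e s mu chi n) (hist G e s mu chi n)]
     else hist G e s mu chi n)"
  by (simp add: enabled_def pos_def Let_def)

declare hist.simps(2)[simp del]

lemma hist_ne [simp]: "hist G e s mu chi n \<noteq> []"
  by (induction n) (auto simp: Let_def hist.simps(2))

lemma pos_0 [simp]: "pos G e s mu chi 0 = s"
  by (simp add: pos_def)

lemma last_hist: "last (hist G e s mu chi n) = pos G e s mu chi n"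
  by (simp add: pos_def)

lemma pos_Suc:
  "pos G e s mu chi (Suc n) =
    (if enabled G e (pos G e s mu chi n)
     then owner G mu chi (pos G e s mu chi n) (hist G e s mu chi n)
     else pos G e s mu chi n)"
  unfolding pos_def[of G e s mu chi "Suc n"] by (subst hist_Suc') (simp add: pos_def)

lemma hist_Suc_enabled:
  "enabled G e (pos G e s mu chi n) \<Longrightarrow>
     hist G e s mu chi (Suc n) = hist G e s mu chi n @ [pos G e s mu chi (Suc n)]"
  by (subst hist_Suc') (simp add: pos_Suc)

lemma hist_Suc_stuck:
  "\<not> enabled G e (pos G e s mu chi n) \<Longrightarrow> hist G e s mu chi (Suc n) = hist G e s mu chi n"
  by (subst hist_Suc') simp

lemma hist_prefix: "n \<le> m \<Longrightarrow> prefix (hist G e s mu chi n) (hist G e s mu chi m)"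
proof (induction m rule: dec_induct)
  case (step m)
  have "prefix (hist G e s mu chi m) (hist G e s mu chi (Suc m))"
    by (cases "enabled G e (pos G e s mu chi m)") (auto simp: hist_Suc_enabled hist_Suc_stuck)
  with step.IH show ?case
    by (rule prefix_order.order_trans)
qed simp

lemma hist_length: "length (hist G e s mu chi n) \<le> Suc n"
  by (induction n) (auto simp: hist_Suc')

lemma hist_length_enabled:
  assumes "\<And>i. i < n \<Longrightarrow> enabled G e (pos G e s mu chi i)"
  shows "length (hist G e s mu chi n) = Suc n"
  using assms by (induction n) (auto simp: hist_Suc_enabled)

lemma hist_take_pos:
  assumes "\<And>k. k < i \<Longrightarrow> enabled G e (pos G e s mu chi k)" "j \<le> i"
  shows "take (Suc j) (hist G e s mu chi i) = hist G e s mu chi j"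
    and "hist G e s mu chi i ! j = pos G e s mu chi j"
proof -
  have p: "prefix (hist G e s mu chi j) (hist G e s mu chi i)"
    by (rule hist_prefix[OF assms(2)])
  have l: "length (hist G e s mu chi j) = Suc j"
    by (rule hist_length_enabled) (use assms in auto)
  show t: "take (Suc j) (hist G e s mu chi i) = hist G e s mu chi j"
    using p l by (metis append_eq_conv_conj prefix_def)
  have "hist G e s mu chi i ! j = hist G e s mu chi j ! j"
    using l by (metis lessI nth_take t)
  also have "\<dots> = pos G e s mu chi j"
    using l last_conv_nth[of "hist G e s mu chi j"] by (simp add: last_hist)
  finally show "hist G e s mu chi i ! j = pos G e s mu chi j" .
qed

lemma prefix_hist:
  assumes "prefix Q (hist G e s mu chi n)" "Q \<noteq> []"
  shows "\<exists>k\<le>n. hist G e s mu chi k = Q"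
  using assms
proof (induction n)
  case 0
  then show ?case by (auto simp: prefix_Cons)
next
  case (Suc n)
  show ?case
  proof (cases "enabled G e (pos G e s mu chi n)")
    case True
    with Suc.prems have "prefix Q (hist G e s mu chi n @ [pos G e s mu chi (Suc n)])"
      by (simp add: hist_Suc_enabled)
    then have "Q = hist G e s mu chi n @ [pos G e s mu chi (Suc n)] \<or> prefix Q (hist G e s mu chi n)"
      by (simp add: prefix_snoc)
    then show ?thesis using Suc True by (metis hist_Suc_enabled le_Suc_eq)
  next
    case False
    then have "prefix Q (hist G e s mu chi n)" using Suc.prems by (simp add: hist_Suc_stuck)
    then show ?thesis using Suc.IH Suc.prems(2) le_SucI by blast
  qed
qed

lemma hist_stuck:
  assumes "\<not> enabled G e (pos G e s mu chi n)"
  shows "hist G e s mu chi (n + j) = hist G e s mu chi n"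
proof (induction j)
  case (Suc j)
  then have "pos G e s mu chi (n + j) = pos G e s mu chi n" by (simp add: pos_def)
  then show ?case using Suc assms by (simp add: hist_Suc_stuck)
qed simp

lemma pos_stuck:
  "\<not> enabled G e (pos G e s mu chi i) \<Longrightarrow> pos G e s mu chi (i + j) = pos G e s mu chi i"
  using hist_stuck by (metis pos_def)

lemma pos_stuck_start: "\<not> enabled G e s \<Longrightarrow> pos G e s mu chi n = s"
  using pos_stuck[of G e s mu chi 0 n] by simp

lemma hist_strict_prefix:
  assumes "hist G e s mu chi k = P" "strict_prefix h P" "h \<noteq> []"
  shows "\<exists>j<k. hist G e s mu chi j = h \<and> enabled G e (pos G e s mu chi j) \<and>
     hist G e s mu chi (Suc j) = h @ [P ! length h] \<and> P ! length h = owner G mu chi (last h) h"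
proof -
  obtain j where j: "j \<le> k" "hist G e s mu chi j = h"
    using prefix_hist[of h G e s mu chi k] assms strict_prefix_def by metis
  have jk: "j \<noteq> k" using j assms by auto
  have en: "enabled G e (pos G e s mu chi j)"
  proof (rule ccontr)
    assume "\<not> ?thesis"
    then have "hist G e s mu chi (j + (k - j)) = hist G e s mu chi j" by (rule hist_stuck)
    then show False using j assms by simp
  qed
  have lp: "last h = pos G e s mu chi j" using j(2) by (metis last_hist)
  have S: "hist G e s mu chi (Suc j) = h @ [owner G mu chi (last h) h]"
    using hist_Suc'[of G e s mu chi j] en j lp by simp
  have "prefix (hist G e s mu chi (Suc j)) P" using assms(1) hist_prefix j jk
    by (metis Suc_leI le_neq_implies_less)
  then obtain t where "P = (h @ [owner G mu chi (last h) h]) @ t" using S by (auto simp: prefix_def)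
  then have "P ! length h = owner G mu chi (last h) h" by (simp add: nth_append)
  then show ?thesis using j jk en S by (intro exI[of _ j]) auto
qed

lemma hist_agree:
  assumes "\<And>i. i < n \<Longrightarrow> enabled G e (pos G e s mu chi i) \<Longrightarrow>
      owner G mu' chi' (pos G e s mu chi i) (hist G e s mu chi i) =
      owner G mu chi (pos G e s mu chi i) (hist G e s mu chi i)"
  shows "hist G e s mu' chi' n = hist G e s mu chi n"
  using assms
proof (induction n)
  case (Suc n)
  then have IH: "hist G e s mu' chi' n = hist G e s mu chi n" by auto
  then have "pos G e s mu' chi' n = pos G e s mu chi n" by (simp add: pos_def)
  with Suc.prems[of n] IH show ?case by (auto simp: hist_Suc')
qed simp

lemma hist_sim:
  fixes f :: "'a state \<Rightarrow> 'b state"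
  assumes "f s1 = s2"
  and "\<And>i. i < n \<Longrightarrow> hist G2 e2 s2 mu2 chi2 i = map f (hist G1 e1 s1 mu1 chi1 i) \<Longrightarrow>
        (enabled G2 e2 (f (pos G1 e1 s1 mu1 chi1 i)) \<longleftrightarrow> enabled G1 e1 (pos G1 e1 s1 mu1 chi1 i)) \<and>
        (enabled G1 e1 (pos G1 e1 s1 mu1 chi1 i) \<longrightarrow>
          owner G2 mu2 chi2 (f (pos G1 e1 s1 mu1 chi1 i)) (map f (hist G1 e1 s1 mu1 chi1 i))
          = f (owner G1 mu1 chi1 (pos G1 e1 s1 mu1 chi1 i) (hist G1 e1 s1 mu1 chi1 i)))"
  shows "hist G2 e2 s2 mu2 chi2 n = map f (hist G1 e1 s1 mu1 chi1 n)"
  using assms(2)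
proof (induction n)
  case 0
  then show ?case using assms(1) by simp
next
  case (Suc n)
  then have IH: "hist G2 e2 s2 mu2 chi2 n = map f (hist G1 e1 s1 mu1 chi1 n)" by auto
  then have P: "pos G2 e2 s2 mu2 chi2 n = f (pos G1 e1 s1 mu1 chi1 n)"
    by (simp add: pos_def last_map)
  note C = Suc.prems[of n, OF _ IH]
  show ?case
    using C IH P
    by (cases "enabled G1 e1 (pos G1 e1 s1 mu1 chi1 n)") (simp_all add: hist_Suc_enabled hist_Suc_stuck pos_Suc)
qed

lemma pos_glue:
  assumes "hist G e s mu chi k = P" "H0 \<noteq> []" "last H0 = last P"
   "hist G e (hd H0) mu2 chi2 m = H0"
   "\<And>t. mu (P @ t) = mu2 (H0 @ t)" "\<And>t. chi (P @ t) = chi2 (H0 @ t)"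
  shows "pos G e s mu chi (k + j) = pos G e (hd H0) mu2 chi2 (m + j)"
proof -
  have "\<exists>t. hist G e s mu chi (k + j) = P @ t \<and> hist G e (hd H0) mu2 chi2 (m + j) = H0 @ t"
  proof (induction j)
    case 0
    then show ?case using assms by (intro exI[of _ "[]"]) simp
  next
    case (Suc j)
    then obtain t where t: "hist G e s mu chi (k + j) = P @ t" "hist G e (hd H0) mu2 chi2 (m + j) = H0 @ t"
      by blast
    have P: "pos G e (hd H0) mu2 chi2 (m + j) = pos G e s mu chi (k + j)"
      using t assms(2,3) by (cases "t = []") (auto simp: pos_def)
    show ?case
    proof (cases "enabled G e (pos G e s mu chi (k + j))")
      case True
      then show ?thesis using t P assms(5,6)
        by (intro exI[of _ "t @ [pos G e s mu chi (Suc (k + j))]"]) (simp add: hist_Suc_enabled pos_Suc)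
    next
      case False
      then show ?thesis using t P by (intro exI[of _ t]) (simp add: hist_Suc_stuck)
    qed
  qed
  then obtain t where "hist G e s mu chi (k + j) = P @ t" "hist G e (hd H0) mu2 chi2 (m + j) = H0 @ t"
    by blast
  then show ?thesis using assms(2,3) by (cases "t = []") (auto simp: pos_def)
qed

section \<open>Legal plays\<close>

lemma succ_mono: "succ G e c q \<Longrightarrow> snd c \<le> snd q"
  unfolding succ_def by auto

lemma succ_delay: "succ G e c q \<Longrightarrow> snd c < snd q \<Longrightarrow> fst q = fst c \<and> \<not> urgent G (fst c) \<and> snd q \<le> e"
  unfolding succ_def by auto

locale legal_play =
  fixes G :: "'l game" and e :: real and s :: "'l state" and mu chi :: "'l strategy"
  assumes mu_valid: "valid_strat G e (Lmin G) mu"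
    and chi_valid: "valid_strat G e (Lmax G) chi"
    and start_loc: "fst s \<in> locs G"
    and edges_closed: "edges G \<subseteq> locs G \<times> locs G"
begin

lemma owner_succ:
  assumes "fst c \<in> locs G" "enabled G e c" "h \<noteq> []" "last h = c"
  shows "succ G e c (owner G mu chi c h)"
proof (cases "fst c \<in> Lmin G")
  case True
  then show ?thesis using mu_valid assms unfolding valid_strat_def enabled_def by auto
next
  case False
  then have "fst c \<in> Lmax G" using assms(1) by (auto simp: locs_def)
  then show ?thesis using False chi_valid assms unfolding valid_strat_def enabled_def by auto
qed

lemma pos_loc: "fst (pos G e s mu chi n) \<in> locs G"
proof (induction n)
  case (Suc n)
  let ?c = "pos G e s mu chi n"
  show ?case
  proof (cases "enabled G e ?c")
    case True
    then have "succ G e ?c (pos G e s mu chi (Suc n))"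
      using owner_succ[OF Suc] by (simp add: pos_Suc last_hist)
    then show ?thesis using Suc edges_closed unfolding succ_def by auto
  qed (use Suc in \<open>simp add: pos_Suc\<close>)
qed (simp add: start_loc)

lemma pos_step:
  "enabled G e (pos G e s mu chi n) \<Longrightarrow> succ G e (pos G e s mu chi n) (pos G e s mu chi (Suc n))"
  using owner_succ[OF pos_loc] by (simp add: pos_Suc last_hist)

lemma hist_loc: "x \<in> set (hist G e s mu chi k) \<Longrightarrow> fst x \<in> locs G"
proof (induction k)
  case (Suc k)
  then show ?case
    using pos_loc[of "Suc k"]
    by (cases "enabled G e (pos G e s mu chi k)") (auto simp: hist_Suc_enabled hist_Suc_stuck)
qed (simp add: start_loc)

lemma clock_mono1: "snd (pos G e s mu chi n) \<le> snd (pos G e s mu chi (Suc n))"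
proof (cases "enabled G e (pos G e s mu chi n)")
  case True
  then show ?thesis using pos_step succ_mono by blast
qed (simp add: pos_Suc)

lemma clock_mono: "i \<le> j \<Longrightarrow> snd (pos G e s mu chi i) \<le> snd (pos G e s mu chi j)"
  by (induction j rule: dec_induct) (use clock_mono1 order_trans in blast)+

lemma clock_bound: "snd s \<le> e \<Longrightarrow> snd (pos G e s mu chi n) \<le> e"
proof (induction n)
  case (Suc n)
  then show ?case
    using pos_step[of n] by (cases "enabled G e (pos G e s mu chi n)") (auto simp: pos_Suc succ_def)
qed simp

lemma delay_step:
  assumes "snd (pos G e s mu chi i) < snd (pos G e s mu chi (Suc i))"
  shows "enabled G e (pos G e s mu chi i)" "succ G e (pos G e s mu chi i) (pos G e s mu chi (Suc i))"
proof -
  show en: "enabled G e (pos G e s mu chi i)"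
    using assms by (metis less_irrefl pos_Suc)
  show "succ G e (pos G e s mu chi i) (pos G e s mu chi (Suc i))"
    by (rule pos_step[OF en])
qed

lemma zeno_loc:
  assumes "\<And>i. i \<ge> N \<Longrightarrow> snd (pos G e s mu chi i) < snd (pos G e s mu chi (Suc i))" "i \<ge> N"
  shows "fst (pos G e s mu chi i) = fst (pos G e s mu chi N)"
  using assms(2)
proof (induction i rule: dec_induct)
  case (step i)
  then show ?case using succ_delay[OF delay_step(2)] assms(1) by (metis (no_types))
qed simp

lemma zeno_suffix:
  assumes "\<And>j. pos G e s mu chi (k + j) = pos G2 e2 s2 mu2 chi2 (m + j)"
    and "zeno_tail G e s mu chi P"
  shows "zeno_tail G2 e2 s2 mu2 chi2 P"
proof -
  obtain N where N: "fst (pos G e s mu chi N) \<in> P"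
    "\<And>i. i \<ge> N \<Longrightarrow> snd (pos G e s mu chi i) < snd (pos G e s mu chi (Suc i))"
    using assms(2) unfolding zeno_tail_def by blast
  define N' where "N' = max N k"
  have "fst (pos G e s mu chi N') = fst (pos G e s mu chi N)"
    by (rule zeno_loc[OF N(2)]) (auto simp: N'_def)
  moreover have "pos G e s mu chi N' = pos G2 e2 s2 mu2 chi2 (m + (N' - k))"
    using assms(1)[of "N' - k"] N'_def by simp
  ultimately have 1: "fst (pos G2 e2 s2 mu2 chi2 (m + (N' - k))) \<in> P" using N(1) by simp
  have 2: "snd (pos G2 e2 s2 mu2 chi2 i) < snd (pos G2 e2 s2 mu2 chi2 (Suc i))"
    if i: "i \<ge> m + (N' - k)" for i
  proof -
    have "pos G2 e2 s2 mu2 chi2 i = pos G e s mu chi (k + (i - m))"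
      "pos G2 e2 s2 mu2 chi2 (Suc i) = pos G e s mu chi (Suc (k + (i - m)))"
      using assms(1)[of "i - m"] assms(1)[of "Suc (i - m)"] i by (simp_all add: Suc_diff_le)
    then show ?thesis using N(2)[of "k + (i - m)"] i N'_def by simp
  qed
  show ?thesis unfolding zeno_tail_def using 1 2 by blast
qed

lemma prefix_succ:
  assumes "hist G e s mu chi k = P" "strict_prefix h P" "h \<noteq> []"
  shows "succ G e (last h) (P ! length h)"
proof -
  obtain j where j: "hist G e s mu chi j = h" "enabled G e (pos G e s mu chi j)"
     "hist G e s mu chi (Suc j) = h @ [P ! length h]"
    using hist_strict_prefix[OF assms] by blast
  have "pos G e s mu chi (Suc j) = P ! length h" using j(3) by (simp add: pos_def)
  then show ?thesis using pos_step[OF j(2)] j(1) by (simp add: last_hist[symmetric])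
qed

end

section \<open>Costs of plays\<close>

definition at_goal :: "'l game \<Rightarrow> 'l state \<Rightarrow> bool" where
  "at_goal G q \<longleftrightarrow> goal G (fst q) \<noteq> None"

definition price_upto :: "'l game \<Rightarrow> (nat \<Rightarrow> 'l state) \<Rightarrow> nat \<Rightarrow> real" where
  "price_upto G p n = (\<Sum>i<n. real (rate G (fst (p i))) * (snd (p (Suc i)) - snd (p i)))"

definition play_cost :: "'l game \<Rightarrow> (nat \<Rightarrow> 'l state) \<Rightarrow> ereal" where
  "play_cost G p = (if \<exists>n. at_goal G (p n) then
      (let n = (LEAST n. at_goal G (p n)) in ereal (the (goal G (fst (p n))) (snd (p n)) + price_upto G p n))
     else \<infinity>)"

lemma cost_play_cost: "cost G e s mu chi = play_cost G (pos G e s mu chi)"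
  unfolding cost_def play_cost_def price_upto_def at_goal_def by (simp add: Let_def)

lemma play_cost_not_minf: "play_cost G p \<noteq> -\<infinity>"
  unfolding play_cost_def by (auto simp: Let_def)

lemma cost_not_minf: "cost G e s mu chi \<noteq> -\<infinity>"
  unfolding cost_play_cost by (rule play_cost_not_minf)

lemma play_cost_first:
  assumes "at_goal G (p n)" "\<And>i. i < n \<Longrightarrow> \<not> at_goal G (p i)"
  shows "play_cost G p = ereal (the (goal G (fst (p n))) (snd (p n)) + price_upto G p n)"
proof -
  have "(LEAST n. at_goal G (p n)) = n"
    using assms by (metis (mono_tags, lifting) Least_equality linorder_not_le)
  then show ?thesis using assms unfolding play_cost_def by auto
qed

lemma play_cost_none: "(\<And>i. \<not> at_goal G (p i)) \<Longrightarrow> play_cost G p = \<infinity>"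
  unfolding play_cost_def by auto

lemma price_upto_Suc:
  "price_upto G p (Suc n) = price_upto G p n + real (rate G (fst (p n))) * (snd (p (Suc n)) - snd (p n))"
  by (simp add: price_upto_def)

lemma price_upto_cong: "(\<And>i. i \<le> n \<Longrightarrow> p i = q i) \<Longrightarrow> price_upto G p n = price_upto G q n"
  unfolding price_upto_def by (intro sum.cong) auto

lemma price_upto_shift: "price_upto G p (k + n) = price_upto G p k + price_upto G (\<lambda>j. p (k + j)) n"
  unfolding price_upto_def by (induction n) auto

lemma play_cost_shift:
  assumes "\<And>i. i < k \<Longrightarrow> \<not> at_goal G (p i)"
  shows "play_cost G p = ereal (price_upto G p k) + play_cost G (\<lambda>j. p (k + j))"
proof (cases "\<exists>n. at_goal G (p n)")
  case True
  define n where "n = (LEAST n. at_goal G (p n))"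
  have n: "at_goal G (p n)" "\<And>i. i < n \<Longrightarrow> \<not> at_goal G (p i)"
    using True n_def by (auto intro: LeastI_ex dest: not_less_Least)
  have "k \<le> n" using n assms by (meson not_le)
  then obtain d where d: "n = k + d" using le_add_diff_inverse by metis
  have "play_cost G p = ereal (the (goal G (fst (p n))) (snd (p n)) + price_upto G p n)"
    by (rule play_cost_first[where p=p and n=n, OF n])
  moreover have "play_cost G (\<lambda>j. p (k + j)) =
      ereal (the (goal G (fst (p n))) (snd (p n)) + price_upto G (\<lambda>j. p (k + j)) d)"
    using n d by (subst play_cost_first[where n=d]) auto
  ultimately show ?thesis using d price_upto_shift[of G p k d] by simp
next
  case False
  then have "play_cost G p = \<infinity>" "play_cost G (\<lambda>j. p (k + j)) = \<infinity>"
    by (auto intro: play_cost_none)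
  then show ?thesis by simp
qed

lemma play_cost_cong:
  fixes p :: "nat \<Rightarrow> 'a state" and q :: "nat \<Rightarrow> 'b state"
  assumes "\<And>i. i \<le> n \<Longrightarrow> snd (q i) = snd (p i)"
    and "\<And>i. i \<le> n \<Longrightarrow> goal G2 (fst (q i)) = goal G1 (fst (p i))"
    and "\<And>i. i < n \<Longrightarrow> rate G2 (fst (q i)) = rate G1 (fst (p i))"
    and "at_goal G1 (p n)"
  shows "play_cost G2 q = play_cost G1 p"
proof -
  define n0 where "n0 = (LEAST i. at_goal G1 (p i))"
  have n0: "at_goal G1 (p n0)" "\<And>i. i < n0 \<Longrightarrow> \<not> at_goal G1 (p i)" "n0 \<le> n"
    using assms(4) n0_def by (auto intro: LeastI Least_le dest: not_less_Least)
  have g: "\<And>i. i \<le> n \<Longrightarrow> at_goal G2 (q i) = at_goal G1 (p i)"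
    using assms(2) by (simp add: at_goal_def)
  have "price_upto G2 q n0 = price_upto G1 p n0"
    unfolding price_upto_def using assms(1,3) n0(3) by (intro sum.cong) auto
  moreover have "play_cost G1 p = ereal (the (goal G1 (fst (p n0))) (snd (p n0)) + price_upto G1 p n0)"
    by (rule play_cost_first[where p=p and n=n0, OF n0(1,2)])
  moreover have "play_cost G2 q = ereal (the (goal G2 (fst (q n0))) (snd (q n0)) + price_upto G2 q n0)"
    by (rule play_cost_first) (use g n0 in auto)
  ultimately show ?thesis using assms(1,2) n0(3) by simp
qed

lemma play_cost_bridge:
  assumes pc: "\<And>i. i \<le> k \<Longrightarrow> pc i = p i" "\<And>j. pc (k + j) = q (m + j)"
    and q: "\<And>j. j \<le> m \<Longrightarrow> q j = H ! j"
    and no_goal: "\<And>i. i < k \<Longrightarrow> \<not> at_goal G (p i)" "\<And>i. i < m \<Longrightarrow> \<not> at_goal G (q i)"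
    and price: "price_upto G p k = a + price_upto G (\<lambda>j. H ! j) m"
  shows "play_cost G pc = ereal a + play_cost G q"
proof -
  have "(\<lambda>j. pc (k + j)) = (\<lambda>j. q (m + j))" using pc(2) by auto
  moreover have "play_cost G pc = ereal (price_upto G pc k) + play_cost G (\<lambda>j. pc (k + j))"
    by (rule play_cost_shift) (use pc(1) no_goal(1) in auto)
  moreover have "play_cost G q = ereal (price_upto G q m) + play_cost G (\<lambda>j. q (m + j))"
    by (rule play_cost_shift) (use no_goal(2) in auto)
  moreover have "price_upto G pc k = price_upto G p k" by (rule price_upto_cong) (use pc(1) in auto)
  moreover have "price_upto G q m = price_upto G (\<lambda>j. H ! j) m" by (rule price_upto_cong) (use q in auto)
  ultimately show ?thesis
    using price by (cases "play_cost G (\<lambda>j. q (m + j))") simp_all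
qed

section \<open>Surgery on strategies\<close>

definition delay_strat :: "'l game \<Rightarrow> real \<Rightarrow> 'l strategy" where
  "delay_strat G e h =
     (let c = last h in if succ G e c (fst c, e) then (fst c, e) else (SOME q. succ G e c q))"

lemma delay_strat_succ: "enabled G e (last h) \<Longrightarrow> succ G e (last h) (delay_strat G e h)"
  unfolding delay_strat_def enabled_def Let_def by (auto intro: someI)

lemma delay_strat_valid: "valid_strat G e P (delay_strat G e)"
  unfolding valid_strat_def using delay_strat_succ enabled_def by blast

lemma delay_strat_inc:
  assumes "enabled G e (last h)" "snd (last h) < snd (delay_strat G e h)"
  shows "snd (delay_strat G e h) = e"
proof (cases "succ G e (last h) (fst (last h), e)")
  case True
  then show ?thesis unfolding delay_strat_def by simp
next
  case False
  have "\<not> urgent G (fst (last h)) \<and> snd (delay_strat G e h) \<le> e"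
    using succ_delay[OF delay_strat_succ[OF assms(1)] assms(2)] by blast
  then have "succ G e (last h) (fst (last h), e)" using assms(2) unfolding succ_def by auto
  with False show ?thesis by blast
qed

lemma OptCost_stuck:
  assumes "\<not> enabled G e s" "goal G (fst s) = None"
  shows "OptCost G b e s = \<infinity>"
proof -
  have c: "cost G e s mu chi = \<infinity>" for mu chi
    unfolding cost_play_cost using assms by (intro play_cost_none) (simp add: pos_stuck_start at_goal_def)
  have "max_strat G e s (delay_strat G e)"
    unfolding max_strat_def zeno_tail_def using delay_strat_valid assms(1)
    by (auto simp: pos_stuck_start)
  then have "(SUP chi\<in>{chi. max_strat G e s chi}. cost G e s mu chi) = \<infinity>" for mu
    using c by (metis (mono_tags, lifting) SUP_eq_const empty_iff mem_Collect_eq)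
  then show ?thesis unfolding OptCost_def by (simp add: top_ereal_def[symmetric])
qed

text \<open>\<open>replay G e Q\<close> replays the moves recorded in the list \<open>Q\<close>.  \<open>graft Q R s1 s2\<close> plays \<open>s1\<close>
  until the history extends \<open>Q\<close> and from then on plays \<open>s2\<close> as if the prefix \<open>Q\<close> were \<open>R\<close>;
  \<open>resume G e H0 P \<sigma>\<close> replays \<open>H0\<close> and then behaves as \<open>\<sigma>\<close> does after \<open>P\<close>.\<close>

definition replay :: "'l game \<Rightarrow> real \<Rightarrow> 'l state list \<Rightarrow> 'l strategy" where
  "replay G e Q h = (if strict_prefix h Q then Q ! length h else delay_strat G e h)"

definition graft :: "'l state list \<Rightarrow> 'l state list \<Rightarrow> 'l strategy \<Rightarrow> 'l strategy \<Rightarrow> 'l strategy" where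
  "graft Q R s1 s2 h = (if prefix Q h then s2 (R @ drop (length Q) h) else s1 h)"

abbreviation resume :: "'l game \<Rightarrow> real \<Rightarrow> 'l state list \<Rightarrow> 'l state list \<Rightarrow> 'l strategy \<Rightarrow> 'l strategy" where
  "resume G e H0 P \<sigma> \<equiv> graft H0 P (replay G e H0) \<sigma>"

lemma graft_app [simp]: "graft Q R s1 s2 (Q @ t) = s2 (R @ t)"
  by (simp add: graft_def)

lemma resume_strict_prefix: "strict_prefix h Q \<Longrightarrow> resume G e Q R s2 h = Q ! length h"
  unfolding graft_def replay_def
  by (meson prefix_order.dual_order.strict_trans1 prefix_order.less_irrefl)

lemma replay_valid:
  assumes "\<And>h. strict_prefix h Q \<Longrightarrow> h \<noteq> [] \<Longrightarrow> succ G e (last h) (Q ! length h)"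
  shows "valid_strat G e A (replay G e Q)"
  unfolding valid_strat_def replay_def using assms delay_strat_succ unfolding enabled_def by fastforce

lemma graft_valid:
  assumes "valid_strat G e A s1" "valid_strat G e A s2" "last R = last Q" "R \<noteq> []"
  shows "valid_strat G e A (graft Q R s1 s2)"
  unfolding valid_strat_def
proof (intro allI impI)
  fix h assume h: "h \<noteq> [] \<and> fst (last h) \<in> A \<and> (\<exists>s'. succ G e (last h) s')"
  show "succ G e (last h) (graft Q R s1 s2 h)"
  proof (cases "prefix Q h")
    case True
    then obtain t where t: "h = Q @ t" by (auto simp: prefix_def)
    have L: "last (R @ t) = last h" using t assms(3,4) h by (cases "t = []") auto
    then have "succ G e (last (R @ t)) (s2 (R @ t))"
      using assms(2,4) h unfolding valid_strat_def by (metis append_is_Nil_conv)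
    then show ?thesis using L t by simp
  next
    case False
    then show ?thesis using assms(1) h unfolding valid_strat_def graft_def by simp
  qed
qed

lemma hist_reproduce:
  assumes "hist G e s mu chi k = P"
    "\<And>h. strict_prefix h P \<Longrightarrow> h \<noteq> [] \<Longrightarrow> owner G mu' chi' (last h) h = P ! length h"
  shows "hist G e s mu' chi' k = P"
proof -
  have "hist G e s mu' chi' k = hist G e s mu chi k"
  proof (rule hist_agree)
    fix i assume i: "i < k" "enabled G e (pos G e s mu chi i)"
    have "prefix (hist G e s mu chi (Suc i)) P" using assms(1) hist_prefix i by (metis Suc_leI)
    then obtain t where "P = hist G e s mu chi i @ ([pos G e s mu chi (Suc i)] @ t)"
      using hist_Suc_enabled[OF i(2)] by (auto simp: prefix_def)
    then have sp: "strict_prefix (hist G e s mu chi i) P"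
      by (simp add: strict_prefix_def)
    show "owner G mu' chi' (pos G e s mu chi i) (hist G e s mu chi i) =
        owner G mu chi (pos G e s mu chi i) (hist G e s mu chi i)"
      using assms(2)[OF sp] hist_strict_prefix[OF assms(1) sp] by (auto simp: last_hist)
  qed
  then show ?thesis using assms(1) by simp
qed

text \<open>Such a history serves as the start of a new play replacing a history of an old one.\<close>

definition entry :: "'l game \<Rightarrow> real \<Rightarrow> 'l set \<Rightarrow> 'l state \<Rightarrow> 'l state list \<Rightarrow> bool" where
  "entry G e A s2 H0 \<longleftrightarrow> H0 = [s2] \<or> (\<exists>q. H0 = [s2, q] \<and> fst s2 \<in> A \<and> succ G e s2 q)"

lemma entry_simps [simp]:
  "entry G e A s2 [s2]"
  "entry G e A s2 [s2, q] \<longleftrightarrow> fst s2 \<in> A \<and> succ G e s2 q"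
  by (auto simp: entry_def)

lemma entry_ne: "entry G e A s2 H0 \<Longrightarrow> H0 \<noteq> []"
  and entry_hd: "entry G e A s2 H0 \<Longrightarrow> hd H0 = s2"
  by (auto simp: entry_def)

lemma entry_replay_valid: "entry G e A s2 H0 \<Longrightarrow> valid_strat G e B (replay G e H0)"
  by (rule replay_valid) (auto simp: entry_def strict_prefix_def prefix_Cons)

lemma entry_hist:
  assumes "entry G e A s2 H0" "\<And>q. H0 = [s2, q] \<Longrightarrow> owner G mu chi s2 [s2] = q"
  shows "hist G e s2 mu chi (length H0 - 1) = H0"
  using assms unfolding entry_def
  by (force simp: hist_Suc' enabled_def pos_Suc)

lemma resume_first: "H0 = [s2, q] \<Longrightarrow> resume G e H0 P \<sigma> [s2] = q"
  by (simp add: graft_def replay_def strict_prefix_def)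

lemma zeno_glue:
  assumes legal: "legal_play G e s mu chi" and legal2: "legal_play G e s2 mu2 chi2"
    and P: "hist G e s mu chi k = P" and H0: "hist G e s2 mu2 chi2 m = H0" "H0 \<noteq> []" "hd H0 = s2"
    and L: "last H0 = last P"
    and "\<And>t. mu (P @ t) = mu2 (H0 @ t)" "\<And>t. chi (P @ t) = chi2 (H0 @ t)"
  shows "zeno_tail G e s mu chi A \<longleftrightarrow> zeno_tail G e s2 mu2 chi2 A"
proof -
  have g: "pos G e s mu chi (k + j) = pos G e s2 mu2 chi2 (m + j)" for j
    using pos_glue[OF P H0(2) L, of mu2 chi2 m j] H0(1,3) assms(8,9) by simp
  show ?thesis
    using legal_play.zeno_suffix[OF legal g] legal_play.zeno_suffix[OF legal2 g[symmetric]] by blast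
qed

lemma resume_min:
  assumes mu: "min_strat G e s mu" and legal: "legal_play G e s mu chi"
    and P: "hist G e s mu chi k = P"
    and H0: "entry G e (Lmin G) s2 H0" and L: "last H0 = last P" and s2: "fst s2 \<in> locs G"
  shows "min_strat G e s2 (resume G e H0 P mu)"
proof -
  let ?m2 = "resume G e H0 P mu"
  have E: "edges G \<subseteq> locs G \<times> locs G" and muv: "valid_strat G e (Lmin G) mu"
    using legal by (simp_all add: legal_play_def)
  have v2: "valid_strat G e (Lmin G) ?m2"
    by (rule graft_valid[OF entry_replay_valid[OF H0] muv]) (use L P in auto)
  moreover have "\<not> zeno_tail G e s2 ?m2 chi2 (Lmin G)" if c2: "valid_strat G e (Lmax G) chi2" for chi2
  proof
    assume Z: "zeno_tail G e s2 ?m2 chi2 (Lmin G)"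
    let ?c = "resume G e P H0 chi2"
    have vc: "valid_strat G e (Lmax G) ?c"
      by (rule graft_valid[OF replay_valid c2])
         (use legal_play.prefix_succ[OF legal P] L entry_ne[OF H0] in auto)
    have hk: "hist G e s mu ?c k = P"
      by (rule hist_reproduce[OF P]) (use hist_strict_prefix[OF P] resume_strict_prefix in force)
    have h2: "hist G e s2 ?m2 chi2 (length H0 - 1) = H0"
      by (rule entry_hist[OF H0]) (use H0 in \<open>auto simp: resume_first entry_def\<close>)
    have "zeno_tail G e s mu ?c (Lmin G)"
      using zeno_glue[OF _ _ hk h2 entry_ne[OF H0] entry_hd[OF H0] L] Z v2 c2 vc muv s2 E legal
      by (simp add: legal_play_def)
    then show False using mu vc by (simp add: min_strat_def)
  qed
  ultimately show ?thesis by (simp add: min_strat_def)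
qed

lemma resume_max:
  assumes chi: "max_strat G e s chi" and legal: "legal_play G e s mu chi"
    and D: "Lmin G \<inter> Lmax G = {}" and P: "hist G e s mu chi k = P"
    and H0: "entry G e (Lmax G) s2 H0" and L: "last H0 = last P" and s2: "fst s2 \<in> locs G"
  shows "max_strat G e s2 (resume G e H0 P chi)"
proof -
  let ?c2 = "resume G e H0 P chi"
  have E: "edges G \<subseteq> locs G \<times> locs G" and chiv: "valid_strat G e (Lmax G) chi"
    using legal by (simp_all add: legal_play_def)
  have v2: "valid_strat G e (Lmax G) ?c2"
    by (rule graft_valid[OF entry_replay_valid[OF H0] chiv]) (use L P in auto)
  moreover have "\<not> zeno_tail G e s2 mu2 ?c2 (Lmax G)" if m2: "valid_strat G e (Lmin G) mu2" for mu2
  proof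
    assume Z: "zeno_tail G e s2 mu2 ?c2 (Lmax G)"
    let ?m = "resume G e P H0 mu2"
    have vm: "valid_strat G e (Lmin G) ?m"
      by (rule graft_valid[OF replay_valid m2])
         (use legal_play.prefix_succ[OF legal P] L entry_ne[OF H0] in auto)
    have hk: "hist G e s ?m chi k = P"
      by (rule hist_reproduce[OF P]) (use hist_strict_prefix[OF P] resume_strict_prefix in force)
    have h2: "hist G e s2 mu2 ?c2 (length H0 - 1) = H0"
      by (rule entry_hist[OF H0]) (use H0 D in \<open>auto simp: resume_first entry_def\<close>)
    have "zeno_tail G e s ?m chi (Lmax G)"
      using zeno_glue[OF _ _ hk h2 entry_ne[OF H0] entry_hd[OF H0] L] Z v2 m2 vm chiv s2 E legal
      by (simp add: legal_play_def)
    then show False using chi vm by (simp add: max_strat_def)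
  qed
  ultimately show ?thesis by (simp add: max_strat_def)
qed

lemma graft_max:
  assumes c1: "max_strat G e s chi1" and c2: "max_strat G e s2 chi2" and s: "fst s \<in> locs G"
    and E: "edges G \<subseteq> locs G \<times> locs G"
    and Pne: "P \<noteq> []" and L: "last H0 = last P"
    and H0: "entry G e (Lmin G) s2 H0" and s2: "fst s2 \<in> locs G"
  shows "max_strat G e s (graft P H0 chi1 chi2)"
proof -
  let ?c = "graft P H0 chi1 chi2"
  have v: "valid_strat G e (Lmax G) ?c"
    by (rule graft_valid) (use c1 c2 L entry_ne[OF H0] in \<open>auto simp: max_strat_def\<close>)
  moreover have "\<not> zeno_tail G e s mu ?c (Lmax G)" if m: "valid_strat G e (Lmin G) mu" for mu
  proof
    assume Z: "zeno_tail G e s mu ?c (Lmax G)"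
    show False
    proof (cases "\<exists>k. hist G e s mu ?c k = P")
      case True
      then obtain k where P: "hist G e s mu ?c k = P" by blast
      let ?m2 = "resume G e H0 P mu"
      have v2: "valid_strat G e (Lmin G) ?m2"
        by (rule graft_valid[OF entry_replay_valid[OF H0] m]) (use L Pne in auto)
      have h2: "hist G e s2 ?m2 chi2 (length H0 - 1) = H0"
        by (rule entry_hist[OF H0]) (use H0 in \<open>auto simp: resume_first entry_def\<close>)
      have "zeno_tail G e s2 ?m2 chi2 (Lmax G)"
        using zeno_glue[OF _ _ P h2 entry_ne[OF H0] entry_hd[OF H0] L] Z v v2 m s s2 E c2
        by (simp add: legal_play_def max_strat_def)
      then show False using c2 v2 by (simp add: max_strat_def)
    next
      case False
      have "\<not> prefix P (hist G e s mu ?c i)" for i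
        using prefix_hist[of P G e s mu ?c i] Pne False by blast
      then have "hist G e s mu chi1 n = hist G e s mu ?c n" for n
        by (intro hist_agree) (auto simp: graft_def last_hist)
      then have "zeno_tail G e s mu chi1 (Lmax G)" using Z by (simp add: zeno_tail_def pos_def)
      then show False using c1 m by (simp add: max_strat_def)
    qed
  qed
  ultimately show ?thesis by (simp add: max_strat_def)
qed

section \<open>The cost-consistent game\<close>

definition inl_st :: "'l state \<Rightarrow> ('l + 'l) state" where
  "inl_st q = (Inl (fst q), snd q)"

definition base_st :: "('l + 'l) state \<Rightarrow> 'l state" where
  "base_st q = (case_sum id id (fst q), snd q)"

definition exit_st :: "'l state \<Rightarrow> ('l + 'l) state" where
  "exit_st q = (Inr (fst q), snd q)"

lemma inl_st_simps [simp]: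
  "fst (inl_st q) = Inl (fst q)" "snd (inl_st q) = snd q" "base_st (inl_st q) = q"
  "inl_st a = inl_st b \<longleftrightarrow> a = b"
  by (auto simp: inl_st_def base_st_def prod_eq_iff)

lemma exit_st_simps [simp]: "fst (exit_st q) = Inr (fst q)" "snd (exit_st q) = snd q"
  by (simp_all add: exit_st_def)

lemma exit_st_neq_inl_st [simp]: "exit_st a \<noteq> inl_st b" "inl_st b \<noteq> exit_st a"
  by (auto simp: exit_st_def inl_st_def)

lemma inl_st_base_st: "isl (fst q) \<Longrightarrow> inl_st (base_st q) = q"
  by (cases q) (auto simp: base_st_def inl_st_def isl_def)

lemma last_map_inl_st: "h \<noteq> [] \<Longrightarrow> last (map inl_st h) = inl_st (last h)"
  by (simp add: last_map)

lemma pos_map_inl_st: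
  "hist G' e' s' mu' chi' n = map inl_st (hist G e s mu chi n) \<Longrightarrow>
     pos G' e' s' mu' chi' n = inl_st (pos G e s mu chi n)"
  by (simp add: pos_def last_map)

locale split_game =
  fixes G :: "'l game" and r e2 :: real
  assumes edges_closed: "edges G \<subseteq> locs G \<times> locs G"
    and players_disjoint: "Lmin G \<inter> Lmax G = {}"
    and r_le_e2: "r \<le> e2"
    and value_finite: "\<And>l. l \<in> locs G \<Longrightarrow> \<bar>OptCost G r e2 (l, r)\<bar> \<noteq> \<infinity>"
begin

definition G' :: "('l + 'l) game" where
  "G' = cost_consistent G r e2"

definition V :: "'l \<Rightarrow> real" where
  "V l = real_of_ereal (OptCost G r e2 (l, r))"

lemma OptCost_V: "l \<in> locs G \<Longrightarrow> OptCost G r e2 (l, r) = ereal (V l)"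
  using value_finite[of l] unfolding V_def by (cases "OptCost G r e2 (l, r)") auto

lemma G'_simps [simp]:
  "Inl l \<in> Lmin G' \<longleftrightarrow> l \<in> Lmin G" "Inr l \<in> Lmin G' \<longleftrightarrow> nonurgent G l"
  "Inl l \<in> Lmax G' \<longleftrightarrow> l \<in> Lmax G" "Inr l \<notin> Lmax G'"
  "Inl l \<in> locs G' \<longleftrightarrow> l \<in> locs G"
  "goal G' (Inl l) = goal G l" "rate G' (Inl l) = rate G l"
  "goal G' (Inr l) = (if nonurgent G l then Some (\<lambda>x. V l + (r - x) * real (rate G l)) else None)"
  by (auto simp: G'_def cost_consistent_def locs_def V_def)

lemma edges'_closed: "edges G' \<subseteq> locs G' \<times> locs G'"
  using edges_closed by (auto simp: G'_def cost_consistent_def locs_def nonurgent_def)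

lemma succ'_Inl:
  "succ G' r (Inl l, x) (Inl l', x') \<longleftrightarrow> succ G r (l, x) (l', x')"
  "succ G' r (Inl l, x) (Inr l', x') \<longleftrightarrow> l' = l \<and> x' = x \<and> nonurgent G l"
  "\<not> succ G' r (Inr l, x) q"
  by (auto simp: succ_def G'_def cost_consistent_def)

lemma succ'_inl_st: "succ G' r (inl_st a) (inl_st b) \<longleftrightarrow> succ G r a b"
  by (cases a, cases b) (simp add: inl_st_def succ'_Inl)

lemma succ'_exit: "succ G' r (inl_st a) (exit_st a) \<longleftrightarrow> nonurgent G (fst a)"
  by (cases a) (simp add: inl_st_def exit_st_def succ'_Inl)

lemma succ'_cases:
  assumes "succ G' r (inl_st a) q"
  shows "isl (fst q) \<and> succ G r a (base_st q) \<or> q = exit_st a \<and> nonurgent G (fst a)"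
proof (cases q)
  case (Pair z x)
  then show ?thesis
    using assms by (cases a; cases z) (auto simp: inl_st_def base_st_def exit_st_def succ'_Inl)
qed

lemma succ_r_e2: "succ G r a b \<Longrightarrow> succ G e2 a b"
  using r_le_e2 by (auto simp: succ_def)

lemma succ_e2_r: "succ G e2 a b \<Longrightarrow> snd b \<le> r \<Longrightarrow> succ G r a b"
  by (auto simp: succ_def)

lemma inl_st_succ_le_r: "succ G' r (inl_st a) q \<Longrightarrow> snd q \<le> r \<or> snd q = snd a"
  using succ'_cases[of a q] by (auto simp: succ_def)

lemma legal_play_G':
  "valid_strat G' r (Lmin G') mu' \<Longrightarrow> valid_strat G' r (Lmax G') chi' \<Longrightarrow> fst s \<in> locs G \<Longrightarrow>
     legal_play G' r (inl_st s) mu' chi'"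
  by (simp add: legal_play_def edges'_closed)

lemma legal_play_G:
  "valid_strat G e2 (Lmin G) mu \<Longrightarrow> valid_strat G e2 (Lmax G) chi \<Longrightarrow> fst s \<in> locs G \<Longrightarrow>
     legal_play G e2 s mu chi"
  by (simp add: legal_play_def edges_closed)

lemma enabled_below_r:
  assumes "snd a < r" "fst a \<in> locs G"
  shows "enabled G' r (inl_st a) \<longleftrightarrow> enabled G e2 a"
proof
  assume "enabled G' r (inl_st a)"
  then obtain q where "succ G' r (inl_st a) q" unfolding enabled_def by blast
  from succ'_cases[OF this] show "enabled G e2 a"
  proof
    assume "q = exit_st a \<and> nonurgent G (fst a)"
    then have "succ G e2 a (fst a, r)" using assms r_le_e2 unfolding succ_def nonurgent_def by auto
    then show ?thesis unfolding enabled_def by blast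
  qed (use succ_r_e2 enabled_def in blast)
next
  assume "enabled G e2 a"
  then obtain q where q: "succ G e2 a q" unfolding enabled_def by blast
  have "succ G r a q \<or> succ G r a (fst a, r)"
    using q assms unfolding succ_def by auto
  then show "enabled G' r (inl_st a)" using succ'_inl_st unfolding enabled_def by blast
qed

text \<open>Up to \<open>r\<close>, a non-goal state that is enabled in \<open>G\<close> is enabled in \<open>G'\<close>; conversely, a
  non-goal dead end of \<open>G\<close> at clock \<open>\<le> r\<close> is a dead end of \<open>G'\<close>, since otherwise the
  optimal cost at \<open>(l, r)\<close> would be infinite.\<close>

lemma enabled_upto_r:
  assumes "goal G (fst a) = None" "snd a \<le> r" "fst a \<in> locs G"
  shows "enabled G' r (inl_st a) \<longleftrightarrow> enabled G e2 a"
proof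
  assume en': "enabled G' r (inl_st a)"
  show "enabled G e2 a"
  proof (rule ccontr)
    assume stuck: "\<not> enabled G e2 a"
    obtain q where q: "succ G' r (inl_st a) q" using en' unfolding enabled_def by blast
    have nu: "nonurgent G (fst a)"
      using succ'_cases[OF q] stuck succ_r_e2 unfolding enabled_def by blast
    have "snd a = r"
    proof (rule ccontr)
      assume "snd a \<noteq> r"
      then have "succ G e2 a (fst a, r)" using assms(2) nu r_le_e2 by (auto simp: succ_def nonurgent_def)
      with stuck show False unfolding enabled_def by blast
    qed
    then have "OptCost G r e2 (fst a, r) = \<infinity>"
      using OptCost_stuck[of G e2 a r] stuck assms(1) by (cases a) simp
    then show False using value_finite[OF assms(3)] by simp
  qed
next
  assume "enabled G e2 a"
  then obtain q where q: "succ G e2 a q" unfolding enabled_def by blast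
  show "enabled G' r (inl_st a)"
  proof (cases "(fst a, fst q) \<in> edges G \<and> snd q = snd a")
    case True
    then have "succ G r a q" unfolding succ_def by auto
    then show ?thesis using succ'_inl_st unfolding enabled_def by blast
  next
    case False
    then have "nonurgent G (fst a)" using q assms unfolding succ_def nonurgent_def by auto
    then show ?thesis using succ'_exit unfolding enabled_def by blast
  qed
qed

end

section \<open>Translating strategies between the two games\<close>

context split_game
begin

text \<open>A strategy of \<open>G'\<close> is lowered to \<open>G\<close> by copying its moves inside the original locations
  and replacing an exit by a delay to \<open>r\<close>.  A strategy of \<open>G\<close> is lifted to \<open>G'\<close> by copying its
  moves as long as they stay below \<open>r\<close> and exiting instead of delaying beyond \<open>r\<close>.\<close>

definition lower :: "('l + 'l) strategy \<Rightarrow> 'l strategy" where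
  "lower \<sigma>' h = (let c = last h; q' = \<sigma>' (map inl_st h) in
     if isl (fst q') \<and> succ G' r (inl_st c) q' then base_st q'
     else if \<not> isl (fst q') \<and> snd c < r \<and> succ G e2 c (fst c, r) then (fst c, r)
     else delay_strat G e2 h)"

definition lift :: "'l strategy \<Rightarrow> ('l + 'l) strategy" where
  "lift \<sigma> h' = (let c = last h'; q = \<sigma> (map base_st h') in
     if succ G' r c (inl_st q) then inl_st q
     else if r < snd q \<and> succ G' r c (exit_st (base_st c)) then exit_st (base_st c)
     else delay_strat G' r h')"

lemma lower_valid: "valid_strat G e2 A (lower \<sigma>')"
  unfolding valid_strat_def
proof (intro allI impI)
  fix h :: "'l state list" assume h: "h \<noteq> [] \<and> fst (last h) \<in> A \<and> (\<exists>s'. succ G e2 (last h) s')"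
  then have en: "enabled G e2 (last h)" by (simp add: enabled_def)
  have copy: "succ G e2 (last h) (base_st q')" if "isl (fst q')" "succ G' r (inl_st (last h)) q'" for q'
    using succ'_cases[OF that(2)] that(1) succ_r_e2 by (metis exit_st_simps(1) sum.disc(2))
  show "succ G e2 (last h) (lower \<sigma>' h)"
    unfolding lower_def Let_def using copy delay_strat_succ[OF en] by auto
qed

lemma lift_valid: "valid_strat G' r A (lift \<sigma>)"
  unfolding valid_strat_def
proof (intro allI impI)
  fix h :: "('l + 'l) state list" assume h: "h \<noteq> [] \<and> fst (last h) \<in> A \<and> (\<exists>s'. succ G' r (last h) s')"
  then have "enabled G' r (last h)" by (simp add: enabled_def)
  then show "succ G' r (last h) (lift \<sigma> h)"
    unfolding lift_def Let_def using delay_strat_succ by auto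
qed

lemma lower_inl:
  assumes "h \<noteq> []" "succ G' r (inl_st (last h)) (\<sigma>' (map inl_st h))" "isl (fst (\<sigma>' (map inl_st h)))"
  shows "inl_st (lower \<sigma>' h) = \<sigma>' (map inl_st h)"
  using assms unfolding lower_def Let_def by (simp add: inl_st_base_st)

lemma lower_exit:
  assumes "h \<noteq> []" "succ G' r (inl_st (last h)) (\<sigma>' (map inl_st h))" "\<not> isl (fst (\<sigma>' (map inl_st h)))"
    "snd (last h) < r"
  shows "lower \<sigma>' h = (fst (last h), r)"
proof -
  have "nonurgent G (fst (last h))"
    using succ'_cases[OF assms(2)] assms(3) by auto
  then have "succ G e2 (last h) (fst (last h), r)"
    using assms(4) r_le_e2 by (auto simp: nonurgent_def succ_def)
  then show ?thesis using assms unfolding lower_def Let_def by simp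
qed

lemma lift_below:
  assumes "h \<noteq> []" "succ G e2 (last h) (\<sigma> h)" "snd (\<sigma> h) \<le> r"
  shows "lift \<sigma> (map inl_st h) = inl_st (\<sigma> h)"
proof -
  have "succ G r (last h) (\<sigma> h)" using succ_e2_r assms(2,3) by blast
  then show ?thesis using assms(1) unfolding lift_def Let_def
    by (simp add: last_map_inl_st succ'_inl_st comp_def)
qed

definition corresp :: "'l strategy \<Rightarrow> ('l + 'l) strategy \<Rightarrow> bool" where
  "corresp \<sigma> \<sigma>' \<longleftrightarrow> \<sigma>' = lift \<sigma> \<or> \<sigma> = lower \<sigma>'"

text \<open>A lifted strategy copies a move that stays \<open>\<le> r\<close>; a move beyond \<open>r\<close> is replaced by an exit,
  or, in a goal location (where no exit exists), by a move to clock \<open>r\<close>.\<close>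

lemma lift_move:
  assumes h: "h \<noteq> []" "fst (last h) \<in> locs G" "snd (last h) \<le> r"
    and q: "succ G e2 (last h) (\<sigma> h)" and q': "succ G' r (inl_st (last h)) (lift \<sigma> (map inl_st h))"
    and cond: "snd (\<sigma> h) \<le> r \<or> isl (fst (lift \<sigma> (map inl_st h))) \<and>
      (snd (lift \<sigma> (map inl_st h)) < r \<or> goal G (fst (last h)) = None)"
  shows "lift \<sigma> (map inl_st h) = inl_st (\<sigma> h)"
proof (cases "snd (\<sigma> h) \<le> r")
  case True
  then show ?thesis using lift_below[where \<sigma>=\<sigma>, OF h(1) q] by simp
next
  case False
  let ?c = "last h" and ?q' = "lift \<sigma> (map inl_st h)"
  have delay: "\<not> urgent G (fst ?c)" using succ_delay[OF q] False h(3) by simp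
  have isl: "isl (fst ?q')" and cond': "snd ?q' < r \<or> goal G (fst ?c) = None"
    using cond False by auto
  have no_copy: "\<not> succ G' r (inl_st ?c) (inl_st (\<sigma> h))"
    using False h(3) by (auto simp: succ'_inl_st succ_def)
  show ?thesis
  proof (cases "nonurgent G (fst ?c)")
    case True
    then have "?q' = exit_st ?c"
      using no_copy False h(1) succ'_exit by (simp add: lift_def Let_def last_map_inl_st comp_def)
    then show ?thesis using isl by simp
  next
    case False
    then have "goal G (fst ?c) \<noteq> None" using h(2) delay by (simp add: nonurgent_def)
    then have lt: "snd ?q' < r" using cond' by (metis (no_types))
    have "?q' = delay_strat G' r (map inl_st h)"
      using no_copy False h(1) succ'_exit by (simp add: lift_def Let_def last_map_inl_st comp_def)
    moreover have "snd (delay_strat G' r (map inl_st h)) \<ge> r"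
    proof (cases "snd ?c < r")
      case True
      then have "succ G' r (inl_st ?c) (Inl (fst ?c), r)"
        using delay by (simp add: inl_st_def succ_def G'_def cost_consistent_def)
      then show ?thesis using h(1) by (simp add: delay_strat_def last_map_inl_st inl_st_def)
    next
      case False
      then show ?thesis using succ_mono[OF q'] calculation h(3) by simp
    qed
    ultimately show ?thesis using lt by simp
  qed
qed

lemma lower_move:
  assumes h: "h \<noteq> []" "snd (last h) \<le> r"
    and q: "succ G e2 (last h) (lower \<sigma>' h)" and q': "succ G' r (inl_st (last h)) (\<sigma>' (map inl_st h))"
    and cond: "snd (lower \<sigma>' h) < r \<or> isl (fst (\<sigma>' (map inl_st h)))"
  shows "\<sigma>' (map inl_st h) = inl_st (lower \<sigma>' h)"
proof (cases "isl (fst (\<sigma>' (map inl_st h)))")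
  case True
  then show ?thesis using lower_inl[where \<sigma>'=\<sigma>', OF h(1) q'] by simp
next
  case False
  then have lt: "snd (lower \<sigma>' h) < r" using cond by simp
  have "snd (last h) = r"
  proof (rule ccontr)
    assume "snd (last h) \<noteq> r"
    then have "lower \<sigma>' h = (fst (last h), r)"
      using lower_exit[where \<sigma>'=\<sigma>', OF h(1) q' False] h(2) by simp
    then show False using lt by simp
  qed
  then show ?thesis using succ_mono[OF q] lt by simp
qed

lemma corresp_move:
  assumes corr: "corresp \<sigma> \<sigma>'" and h: "h \<noteq> []" "fst (last h) \<in> locs G" "snd (last h) \<le> r"
    and q: "succ G e2 (last h) (\<sigma> h)" and q': "succ G' r (inl_st (last h)) (\<sigma>' (map inl_st h))"
    and cond: "snd (\<sigma> h) < r \<or>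
      isl (fst (\<sigma>' (map inl_st h))) \<and> (snd (\<sigma>' (map inl_st h)) < r \<or> goal G (fst (last h)) = None)"
  shows "\<sigma>' (map inl_st h) = inl_st (\<sigma> h)"
  using corr unfolding corresp_def
proof
  assume "\<sigma>' = lift \<sigma>"
  then show ?thesis using lift_move[where \<sigma>=\<sigma>, OF h q] q' cond by auto
next
  assume "\<sigma> = lower \<sigma>'"
  then show ?thesis using lower_move[where \<sigma>'=\<sigma>', OF h(1,3) _ q'] q cond by auto
qed

lemma corresp_hist:
  assumes corr: "corresp mu mu'" "corresp chi chi'"
    and legal: "legal_play G e2 s mu chi" and legal': "legal_play G' r (inl_st s) mu' chi'"
    and step: "\<And>i. i < n \<Longrightarrow> pos G' r (inl_st s) mu' chi' i = inl_st (pos G e2 s mu chi i) \<Longrightarrow>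
        snd (pos G e2 s mu chi i) \<le> r \<and>
        (enabled G' r (inl_st (pos G e2 s mu chi i)) \<longleftrightarrow> enabled G e2 (pos G e2 s mu chi i)) \<and>
        (enabled G e2 (pos G e2 s mu chi i) \<longrightarrow> snd (pos G e2 s mu chi (Suc i)) < r \<or>
           isl (fst (pos G' r (inl_st s) mu' chi' (Suc i))) \<and>
           (snd (pos G' r (inl_st s) mu' chi' (Suc i)) < r \<or> goal G (fst (pos G e2 s mu chi i)) = None))"
  shows "hist G' r (inl_st s) mu' chi' n = map inl_st (hist G e2 s mu chi n)"
proof (rule hist_sim[where f = inl_st])
  fix i assume i: "i < n" and Hi: "hist G' r (inl_st s) mu' chi' i = map inl_st (hist G e2 s mu chi i)"
  let ?c = "pos G e2 s mu chi i" and ?h = "hist G e2 s mu chi i"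
  have pc: "pos G' r (inl_st s) mu' chi' i = inl_st ?c" using Hi by (rule pos_map_inl_st)
  note st = step[OF i pc]
  show "(enabled G' r (inl_st ?c) \<longleftrightarrow> enabled G e2 ?c) \<and>
      (enabled G e2 ?c \<longrightarrow> owner G' mu' chi' (inl_st ?c) (map inl_st ?h) = inl_st (owner G mu chi ?c ?h))"
  proof (intro conjI impI)
    assume en: "enabled G e2 ?c"
    then have en': "enabled G' r (inl_st ?c)" using st by simp
    obtain \<sigma> \<sigma>' where \<sigma>: "corresp \<sigma> \<sigma>'" "owner G mu chi ?c = \<sigma>" "owner G' mu' chi' (inl_st ?c) = \<sigma>'"
      using corr by (cases "fst ?c \<in> Lmin G") auto
    have nxt: "pos G e2 s mu chi (Suc i) = \<sigma> ?h" using en \<sigma>(2) by (simp add: pos_Suc)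
    have nxt': "pos G' r (inl_st s) mu' chi' (Suc i) = \<sigma>' (map inl_st ?h)"
      using en' \<sigma>(3) pc Hi by (simp add: pos_Suc)
    show "owner G' mu' chi' (inl_st ?c) (map inl_st ?h) = inl_st (owner G mu chi ?c ?h)"
      unfolding \<sigma>(2,3)
    proof (rule corresp_move[OF \<sigma>(1)])
      show "succ G e2 (last ?h) (\<sigma> ?h)"
        using legal_play.pos_step[OF legal en] nxt by (simp add: last_hist)
      show "succ G' r (inl_st (last ?h)) (\<sigma>' (map inl_st ?h))"
        using legal_play.pos_step[OF legal' en'[folded pc]] nxt' pc by (simp add: last_hist)
    qed (use st en nxt nxt' legal_play.pos_loc[OF legal] in \<open>auto simp: last_hist\<close>)
  qed (use st in simp)
qed simp

text \<open>A zeno tail of \<open>G'\<close> never visits a fresh goal (these are dead ends) and stays strictly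
  below \<open>r\<close> (the clock increases forever but is bounded by \<open>r\<close>).\<close>

lemma zeno_G'_below_r:
  assumes legal': "legal_play G' r s' mu' chi'" and s': "snd s' \<le> r"
    and Z: "zeno_tail G' r s' mu' chi' A"
  shows "isl (fst (pos G' r s' mu' chi' i)) \<and> snd (pos G' r s' mu' chi' i) < r"
proof -
  let ?p = "pos G' r s' mu' chi'"
  obtain N where N: "\<And>i. i \<ge> N \<Longrightarrow> snd (?p i) < snd (?p (Suc i))"
    using Z by (auto simp: zeno_tail_def)
  have "snd (?p (max i N)) < r"
    using N[of "max i N"] legal_play.clock_bound[OF legal' s', of "Suc (max i N)"] by simp
  then have lt: "snd (?p i) < r"
    using legal_play.clock_mono[OF legal', of i "max i N"] by simp
  have "isl (fst (?p i))"
  proof (rule ccontr)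
    assume "\<not> isl (fst (?p i))"
    then obtain l where "fst (?p i) = Inr l" by (cases "fst (?p i)") auto
    then have "\<not> enabled G' r (?p i)"
      using succ'_Inl(3) by (metis enabled_def prod.collapse)
    then have "?p (i + (max i N - i)) = ?p i" "?p (i + (Suc (max i N) - i)) = ?p i"
      by (rule pos_stuck)+
    then have "?p (max i N) = ?p (Suc (max i N))" by (simp add: Suc_diff_le)
    then show False using N[of "max i N"] by simp
  qed
  then show ?thesis using lt by simp
qed

text \<open>A zeno tail of \<open>G\<close> in which the zeno player uses a lowered strategy stays strictly below \<open>r\<close>:
  above \<open>r\<close> a lowered strategy only delays via the delay strategy, which jumps to \<open>e2\<close> at once.\<close>

lemma zeno_lowered_below_r:
  assumes legal: "legal_play G e2 s mu chi" and s: "snd s \<le> r"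
    and Z: "zeno_tail G e2 s mu chi A"
    and lowered: "\<And>h. h \<noteq> [] \<Longrightarrow> fst (last h) \<in> A \<Longrightarrow> owner G mu chi (last h) h = lower \<sigma>' h"
  shows "snd (pos G e2 s mu chi i) < r"
proof -
  let ?p = "pos G e2 s mu chi"
  obtain N where N: "fst (?p N) \<in> A" "\<And>i. i \<ge> N \<Longrightarrow> snd (?p i) < snd (?p (Suc i))"
    using Z by (auto simp: zeno_tail_def)
  have le: "snd (?p i) \<le> e2" for i
    using legal_play.clock_bound[OF legal] s r_le_e2 by simp
  have tail: "snd (?p i) < r" if iN: "i \<ge> N" for i
  proof (rule ccontr)
    assume "\<not> ?thesis"
    then have ge: "r \<le> snd (?p i)" by simp
    let ?h = "hist G e2 s mu chi i"
    have inc: "snd (?p i) < snd (?p (Suc i))" using N(2)[OF iN] .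
    have en: "enabled G e2 (?p i)" using legal_play.delay_step(1)[OF legal inc] .
    have "fst (?p i) \<in> A" using legal_play.zeno_loc[OF legal N(2) iN] N(1) by simp
    then have nx: "?p (Suc i) = lower \<sigma>' ?h"
      using en lowered[of ?h] by (simp add: pos_Suc last_hist)
    let ?q' = "\<sigma>' (map inl_st ?h)"
    show False
    proof (cases "isl (fst ?q') \<and> succ G' r (inl_st (?p i)) ?q'")
      case True
      then have "?p (Suc i) = base_st ?q'" using nx by (simp add: lower_def Let_def last_hist)
      then have "snd (?p (Suc i)) \<le> r \<or> snd (?p (Suc i)) = snd (?p i)"
        using inl_st_succ_le_r True by (simp add: base_st_def)
      then show False using ge inc by auto
    next
      case False
      then have "?p (Suc i) = delay_strat G e2 ?h" using nx ge by (auto simp: lower_def Let_def last_hist)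
      then have "snd (?p (Suc i)) = e2" using delay_strat_inc[of G e2 ?h] en inc by (simp add: last_hist)
      then show False using N(2)[of "Suc i"] le[of "Suc (Suc i)"] iN by simp
    qed
  qed
  show ?thesis
    using tail[of "max i N"] legal_play.clock_mono[OF legal, of i "max i N"] by simp
qed

lemma zeno_tail_mono: "zeno_tail G e s mu chi A \<Longrightarrow> A \<subseteq> B \<Longrightarrow> zeno_tail G e s mu chi B"
  unfolding zeno_tail_def by blast

lemma zeno_tail_inl_st:
  assumes "\<And>n. pos G' r s' mu' chi' n = inl_st (pos G e2 s mu chi n)"
  shows "zeno_tail G' r s' mu' chi' A' \<longleftrightarrow> zeno_tail G e2 s mu chi {l. Inl l \<in> A'}"
  unfolding zeno_tail_def assms by simp

lemma zeno_from_G':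
  assumes corr: "corresp mu mu'" "corresp chi chi'"
    and legal: "legal_play G e2 s mu chi" and legal': "legal_play G' r (inl_st s) mu' chi'"
    and s: "snd s \<le> r" and Z: "zeno_tail G' r (inl_st s) mu' chi' A'"
  shows "zeno_tail G e2 s mu chi {l. Inl l \<in> A'}"
proof -
  note below = zeno_G'_below_r[OF legal' _ Z, simplified, OF s]
  have "hist G' r (inl_st s) mu' chi' n = map inl_st (hist G e2 s mu chi n)" for n
  proof (rule corresp_hist[OF corr legal legal'])
    fix i assume "pos G' r (inl_st s) mu' chi' i = inl_st (pos G e2 s mu chi i)"
    then have "snd (pos G e2 s mu chi i) < r" using below[of i] by simp
    then show "snd (pos G e2 s mu chi i) \<le> r \<and>
        (enabled G' r (inl_st (pos G e2 s mu chi i)) \<longleftrightarrow> enabled G e2 (pos G e2 s mu chi i)) \<and>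
        (enabled G e2 (pos G e2 s mu chi i) \<longrightarrow> snd (pos G e2 s mu chi (Suc i)) < r \<or>
           isl (fst (pos G' r (inl_st s) mu' chi' (Suc i))) \<and>
           (snd (pos G' r (inl_st s) mu' chi' (Suc i)) < r \<or> goal G (fst (pos G e2 s mu chi i)) = None))"
      using below[of "Suc i"] enabled_below_r legal_play.pos_loc[OF legal] by simp
  qed
  then have "pos G' r (inl_st s) mu' chi' n = inl_st (pos G e2 s mu chi n)" for n
    by (rule pos_map_inl_st)
  then show ?thesis using Z by (simp add: zeno_tail_inl_st)
qed

lemma zeno_to_G':
  assumes corr: "corresp mu mu'" "corresp chi chi'"
    and legal: "legal_play G e2 s mu chi" and legal': "legal_play G' r (inl_st s) mu' chi'"
    and s: "snd s \<le> r" and Z: "zeno_tail G e2 s mu chi A"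
    and lowered: "\<And>h. h \<noteq> [] \<Longrightarrow> fst (last h) \<in> A \<Longrightarrow> owner G mu chi (last h) h = lower \<sigma>' h"
    and A': "\<And>l. l \<in> A \<Longrightarrow> Inl l \<in> A'"
  shows "zeno_tail G' r (inl_st s) mu' chi' A'"
proof -
  note below = zeno_lowered_below_r[OF legal s Z lowered]
  have "hist G' r (inl_st s) mu' chi' n = map inl_st (hist G e2 s mu chi n)" for n
  proof (rule corresp_hist[OF corr legal legal'])
    fix i
    show "snd (pos G e2 s mu chi i) \<le> r \<and>
        (enabled G' r (inl_st (pos G e2 s mu chi i)) \<longleftrightarrow> enabled G e2 (pos G e2 s mu chi i)) \<and>
        (enabled G e2 (pos G e2 s mu chi i) \<longrightarrow> snd (pos G e2 s mu chi (Suc i)) < r \<or>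
           isl (fst (pos G' r (inl_st s) mu' chi' (Suc i))) \<and>
           (snd (pos G' r (inl_st s) mu' chi' (Suc i)) < r \<or> goal G (fst (pos G e2 s mu chi i)) = None))"
      using below[of i] below[of "Suc i"] enabled_below_r legal_play.pos_loc[OF legal] by simp
  qed
  then have P: "pos G' r (inl_st s) mu' chi' n = inl_st (pos G e2 s mu chi n)" for n
    by (rule pos_map_inl_st)
  have "zeno_tail G e2 s mu chi {l. Inl l \<in> A'}"
    by (rule zeno_tail_mono[OF Z]) (use A' in blast)
  then show ?thesis by (simp add: zeno_tail_inl_st[OF P])
qed

lemma Lmin'_Inl: "{l. Inl l \<in> Lmin G'} = Lmin G" and Lmax'_Inl: "{l. Inl l \<in> Lmax G'} = Lmax G"
  by auto

lemma lift_min: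
  assumes mu: "min_strat G e2 s mu" and s: "fst s \<in> locs G" "snd s \<le> r"
  shows "min_strat G' r (inl_st s) (lift mu)"
  unfolding min_strat_def
proof (intro conjI allI impI notI)
  fix chi' assume chi': "valid_strat G' r (Lmax G') chi'" and Z: "zeno_tail G' r (inl_st s) (lift mu) chi' (Lmin G')"
  have "zeno_tail G e2 s mu (lower chi') (Lmin G)"
    using zeno_from_G'[OF _ _ _ _ s(2) Z] mu chi' s(1)
    by (simp add: corresp_def min_strat_def legal_play_G legal_play_G' lower_valid lift_valid Lmin'_Inl)
  then show False using mu lower_valid by (simp add: min_strat_def)
qed (rule lift_valid)

lemma lift_max:
  assumes chi: "max_strat G e2 s chi" and s: "fst s \<in> locs G" "snd s \<le> r"
  shows "max_strat G' r (inl_st s) (lift chi)"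
  unfolding max_strat_def
proof (intro conjI allI impI notI)
  fix mu' assume mu': "valid_strat G' r (Lmin G') mu'" and Z: "zeno_tail G' r (inl_st s) mu' (lift chi) (Lmax G')"
  have "zeno_tail G e2 s (lower mu') chi (Lmax G)"
    using zeno_from_G'[OF _ _ _ _ s(2) Z] chi mu' s(1)
    by (simp add: corresp_def max_strat_def legal_play_G legal_play_G' lower_valid lift_valid Lmax'_Inl)
  then show False using chi lower_valid by (simp add: max_strat_def)
qed (rule lift_valid)

lemma lower_min:
  assumes mu': "min_strat G' r (inl_st s) mu'" and s: "fst s \<in> locs G" "snd s \<le> r"
  shows "min_strat G e2 s (lower mu')"
  unfolding min_strat_def
proof (intro conjI allI impI notI)
  fix chi assume chi: "valid_strat G e2 (Lmax G) chi" and Z: "zeno_tail G e2 s (lower mu') chi (Lmin G)"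
  have "zeno_tail G' r (inl_st s) mu' (lift chi) (Lmin G')"
  proof (rule zeno_to_G'[OF _ _ _ _ s(2) Z])
    show "legal_play G' r (inl_st s) mu' (lift chi)"
      using mu' s(1) by (simp add: min_strat_def legal_play_G' lift_valid)
  qed (use chi s(1) in \<open>auto simp: corresp_def legal_play_G lower_valid\<close>)
  then show False using mu' lift_valid by (simp add: min_strat_def)
qed (rule lower_valid)

lemma lower_max:
  assumes chi': "max_strat G' r (inl_st s) chi'" and s: "fst s \<in> locs G" "snd s \<le> r"
  shows "max_strat G e2 s (lower chi')"
  unfolding max_strat_def
proof (intro conjI allI impI notI)
  fix mu assume mu: "valid_strat G e2 (Lmin G) mu" and Z: "zeno_tail G e2 s mu (lower chi') (Lmax G)"
  have "zeno_tail G' r (inl_st s) (lift mu) chi' (Lmax G')"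
  proof (rule zeno_to_G'[OF _ _ _ _ s(2) Z])
    show "legal_play G' r (inl_st s) (lift mu) chi'"
      using chi' s(1) by (simp add: max_strat_def legal_play_G' lift_valid)
    show "owner G mu (lower chi') (last h) h = lower chi' h" if "fst (last h) \<in> Lmax G" for h
      using that players_disjoint by auto
  qed (use mu s(1) in \<open>auto simp: corresp_def legal_play_G lower_valid\<close>)
  then show False using chi' lift_valid by (simp add: max_strat_def)
qed (rule lower_valid)
end

section \<open>Outcome of plays under corresponding strategies\<close>

context split_game
begin

definition exits_at :: "'l state \<Rightarrow> 'l strategy \<Rightarrow> 'l strategy \<Rightarrow>
    ('l + 'l) strategy \<Rightarrow> ('l + 'l) strategy \<Rightarrow> nat \<Rightarrow> bool" where
  "exits_at s mu chi mu' chi' K \<longleftrightarrow>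
     (\<forall>n\<le>K. hist G' r (inl_st s) mu' chi' n = map inl_st (hist G e2 s mu chi n)) \<and>
     (\<forall>i\<le>K. \<not> at_goal G (pos G e2 s mu chi i) \<and> enabled G e2 (pos G e2 s mu chi i)) \<and>
     pos G' r (inl_st s) mu' chi' (Suc K) = exit_st (pos G e2 s mu chi K)"

lemma exits_at_pos:
  assumes "exits_at s mu chi mu' chi' K" "i \<le> K"
  shows "pos G' r (inl_st s) mu' chi' i = inl_st (pos G e2 s mu chi i)"
  using assms unfolding exits_at_def by (auto intro: pos_map_inl_st)

lemma exits_at_enabled':
  assumes "exits_at s mu chi mu' chi' K"
  shows "enabled G' r (pos G' r (inl_st s) mu' chi' K)"
proof (rule ccontr)
  assume "\<not> ?thesis"
  then have "pos G' r (inl_st s) mu' chi' (Suc K) = pos G' r (inl_st s) mu' chi' K"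
    by (simp add: pos_Suc)
  then show False using assms exits_at_pos[OF assms order_refl] unfolding exits_at_def by simp
qed

text \<open>Corresponding plays coincide as long as no goal is visited and \<open>G'\<close> does not exit: then the
  conditions of \<open>corresp_hist\<close> hold at every step (the clock stays \<open>\<le> r\<close> in \<open>G'\<close>).\<close>

lemma corresp_until_event:
  assumes corr: "corresp mu mu'" "corresp chi chi'"
    and legal: "legal_play G e2 s mu chi" and legal': "legal_play G' r (inl_st s) mu' chi'"
    and s: "snd s \<le> r"
    and no_event: "\<forall>i<n. \<not> at_goal G (pos G e2 s mu chi i) \<and> isl (fst (pos G' r (inl_st s) mu' chi' (Suc i)))"
  shows "hist G' r (inl_st s) mu' chi' n = map inl_st (hist G e2 s mu chi n)"
proof (rule corresp_hist[OF corr legal legal'])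
  fix i assume i: "i < n" and pi: "pos G' r (inl_st s) mu' chi' i = inl_st (pos G e2 s mu chi i)"
  have "snd (pos G e2 s mu chi i) \<le> r"
    using legal_play.clock_bound[OF legal', of i] s pi by simp
  then show "snd (pos G e2 s mu chi i) \<le> r \<and>
      (enabled G' r (inl_st (pos G e2 s mu chi i)) \<longleftrightarrow> enabled G e2 (pos G e2 s mu chi i)) \<and>
      (enabled G e2 (pos G e2 s mu chi i) \<longrightarrow> snd (pos G e2 s mu chi (Suc i)) < r \<or>
         isl (fst (pos G' r (inl_st s) mu' chi' (Suc i))) \<and>
         (snd (pos G' r (inl_st s) mu' chi' (Suc i)) < r \<or> goal G (fst (pos G e2 s mu chi i)) = None))"
    using no_event i enabled_upto_r[OF _ _ legal_play.pos_loc[OF legal]] by (simp add: at_goal_def)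
qed

lemma exits_at_intro:
  assumes legal: "legal_play G e2 s mu chi" and legal': "legal_play G' r (inl_st s) mu' chi'"
    and s: "snd s \<le> r"
    and H: "\<forall>n\<le>K. hist G' r (inl_st s) mu' chi' n = map inl_st (hist G e2 s mu chi n)"
    and before: "\<forall>i<K. \<not> at_goal G (pos G e2 s mu chi i) \<and> enabled G e2 (pos G e2 s mu chi i)"
    and no_goal: "\<not> at_goal G (pos G e2 s mu chi K)"
    and exit: "\<not> isl (fst (pos G' r (inl_st s) mu' chi' (Suc K)))"
  shows "exits_at s mu chi mu' chi' K"
proof -
  let ?p = "pos G e2 s mu chi" and ?p' = "pos G' r (inl_st s) mu' chi'"
  have PK: "?p' K = inl_st (?p K)" using H by (simp add: pos_map_inl_st)
  have en'K: "enabled G' r (?p' K)"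
  proof (rule ccontr)
    assume "\<not> ?thesis"
    then have "?p' (Suc K) = ?p' K" by (simp add: pos_Suc)
    then show False using exit PK by simp
  qed
  moreover have "snd (?p K) \<le> r" using legal_play.clock_bound[OF legal', of K] s PK by simp
  ultimately have enK: "enabled G e2 (?p K)"
    using PK enabled_upto_r[OF _ _ legal_play.pos_loc[OF legal]] no_goal by (simp add: at_goal_def)
  have "succ G' r (inl_st (?p K)) (?p' (Suc K))"
    using legal_play.pos_step[OF legal' en'K] PK by simp
  then have "?p' (Suc K) = exit_st (?p K)" using succ'_cases exit by blast
  then show ?thesis
    unfolding exits_at_def using H before enK no_goal by (auto simp: le_less)
qed

text \<open>Before \<open>K\<close> the
  \<open>G\<close>-play is not stuck, since a non-goal dead end of \<open>G\<close> is one of \<open>G'\<close> as well.\<close>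

lemma corresp_first_event:
  assumes corr: "corresp mu mu'" "corresp chi chi'"
    and legal: "legal_play G e2 s mu chi" and legal': "legal_play G' r (inl_st s) mu' chi'"
    and s: "snd s \<le> r"
  shows "(\<forall>i. \<not> at_goal G (pos G e2 s mu chi i) \<and> \<not> at_goal G' (pos G' r (inl_st s) mu' chi' i)) \<or>
    (\<exists>K. (\<forall>n\<le>K. hist G' r (inl_st s) mu' chi' n = map inl_st (hist G e2 s mu chi n)) \<and>
       (\<forall>i<K. \<not> at_goal G (pos G e2 s mu chi i) \<and> enabled G e2 (pos G e2 s mu chi i) \<and>
          isl (fst (pos G' r (inl_st s) mu' chi' (Suc i)))) \<and>
       (at_goal G (pos G e2 s mu chi K) \<or> exits_at s mu chi mu' chi' K))"
proof -
  let ?p = "pos G e2 s mu chi" and ?p' = "pos G' r (inl_st s) mu' chi'"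
  define ev where "ev i \<longleftrightarrow> at_goal G (?p i) \<or> \<not> isl (fst (?p' (Suc i)))" for i
  have pos_eq: "?p' n = inl_st (?p n)" if "\<forall>i<n. \<not> ev i" for n
    using corresp_until_event[OF corr legal legal' s, of n] that by (simp add: ev_def pos_map_inl_st)
  show ?thesis
  proof (cases "\<exists>i. ev i")
    case False
    then show ?thesis using pos_eq by (auto simp: ev_def at_goal_def)
  next
    case True
    define K where "K = (LEAST i. ev i)"
    have evK: "ev K" using True K_def by (auto intro: LeastI_ex)
    have nev: "\<not> ev i" if "i < K" for i using K_def not_less_Least that by blast
    have H: "\<forall>n\<le>K. hist G' r (inl_st s) mu' chi' n = map inl_st (hist G e2 s mu chi n)"
      using corresp_until_event[OF corr legal legal' s] nev by (auto simp: ev_def)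
    have en: "enabled G e2 (?p i)" if "i < K" for i
    proof (rule ccontr)
      assume stuck: "\<not> ?thesis"
      have PK: "?p' i = inl_st (?p i)" using H that by (simp add: pos_map_inl_st)
      moreover have "snd (?p i) \<le> r" using legal_play.clock_bound[OF legal', of i] s PK by simp
      ultimately have stuck': "\<not> enabled G' r (?p' i)"
        using stuck enabled_upto_r[OF _ _ legal_play.pos_loc[OF legal]] nev[OF that]
        by (simp add: ev_def at_goal_def)
      have "?p (i + (K - i)) = ?p i" "?p' (i + (Suc K - i)) = ?p' i"
        using pos_stuck[OF stuck] pos_stuck[OF stuck'] by blast+
      then have "?p K = ?p i" "?p' (Suc K) = ?p' i" using that by (simp_all add: Suc_diff_le)
      then show False using evK nev[OF that] PK by (simp add: ev_def)
    qed
    have "exits_at s mu chi mu' chi' K" if "\<not> at_goal G (?p K)"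
      by (rule exits_at_intro[OF legal legal' s H]) (use en nev evK that in \<open>auto simp: ev_def\<close>)
    then show ?thesis using H nev en by (intro disjI2 exI[of _ K]) (auto simp: ev_def)
  qed
qed

lemma corresp_outcome:
  assumes corr: "corresp mu mu'" "corresp chi chi'"
    and legal: "legal_play G e2 s mu chi" and legal': "legal_play G' r (inl_st s) mu' chi'"
    and s: "snd s \<le> r"
  shows "cost G' r (inl_st s) mu' chi' = cost G e2 s mu chi \<or> (\<exists>K. exits_at s mu chi mu' chi' K)"
  using corresp_first_event[OF assms]
proof (elim disjE exE conjE)
  assume "\<forall>i. \<not> at_goal G (pos G e2 s mu chi i) \<and> \<not> at_goal G' (pos G' r (inl_st s) mu' chi' i)"
  then show ?thesis unfolding cost_play_cost by (simp add: play_cost_none)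
next
  fix K assume H: "\<forall>n\<le>K. hist G' r (inl_st s) mu' chi' n = map inl_st (hist G e2 s mu chi n)"
    and g: "at_goal G (pos G e2 s mu chi K)"
  have "pos G' r (inl_st s) mu' chi' i = inl_st (pos G e2 s mu chi i)" if "i \<le> K" for i
    using H that by (simp add: pos_map_inl_st)
  then have "play_cost G' (pos G' r (inl_st s) mu' chi') = play_cost G (pos G e2 s mu chi)"
    by (intro play_cost_cong[where n=K]) (use g in auto)
  then show ?thesis by (simp add: cost_play_cost)
qed blast

lemma exit_cost:
  assumes X: "exits_at s mu chi mu' chi' K" and legal': "legal_play G' r (inl_st s) mu' chi'"
    and s: "snd s \<le> r" and pK: "pos G e2 s mu chi K = (l, y)"
  shows "nonurgent G l" "y \<le> r"
    and "cost G' r (inl_st s) mu' chi' = ereal (V l + (r - y) * real (rate G l) + price_upto G (pos G e2 s mu chi) K)"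
proof -
  let ?p = "pos G e2 s mu chi" and ?p' = "pos G' r (inl_st s) mu' chi'"
  have PK: "?p' i = inl_st (?p i)" if "i \<le> K" for i
    using exits_at_pos[OF X that] .
  have ex: "?p' (Suc K) = exit_st (l, y)" using X pK unfolding exits_at_def by auto
  have ng: "\<not> at_goal G (?p i)" if "i \<le> K" for i using X that unfolding exits_at_def by auto
  have "succ G' r (?p' K) (?p' (Suc K))"
    by (rule legal_play.pos_step[OF legal' exits_at_enabled'[OF X]])
  then show nu: "nonurgent G l" using ex PK[of K] pK succ'_exit succ'_cases by fastforce
  show "y \<le> r" using legal_play.clock_bound[OF legal', of K] s PK[of K] pK by simp
  have "play_cost G' ?p' =
      ereal (the (goal G' (fst (?p' (Suc K)))) (snd (?p' (Suc K))) + price_upto G' ?p' (Suc K))"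
    by (rule play_cost_first) (use ex nu PK ng in \<open>auto simp: at_goal_def less_Suc_eq_le\<close>)
  moreover have "price_upto G' ?p' K = price_upto G ?p K"
    unfolding price_upto_def by (intro sum.cong) (use PK in auto)
  ultimately show "cost G' r (inl_st s) mu' chi' =
      ereal (V l + (r - y) * real (rate G l) + price_upto G ?p K)"
    using ex nu PK[of K] pK by (simp add: cost_play_cost price_upto_Suc)
qed

text \<open>Where the play exits, the play of \<open>G\<close> can be bridged to a play from \<open>(l, r)\<close> started with the
  entry history \<open>H0\<close>: after \<open>k\<close> steps the \<open>G\<close>-play is in the last state of \<open>H0\<close>, and its price
  up to \<open>k\<close> is the price up to the exit, plus the waiting until \<open>r\<close>, plus the price of \<open>H0\<close>.\<close>

definition bridge :: "(nat \<Rightarrow> 'l state) \<Rightarrow> nat \<Rightarrow> nat \<Rightarrow> 'l state list \<Rightarrow> bool" where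
  "bridge p K k H0 \<longleftrightarrow> K \<le> k \<and> k \<le> Suc K \<and> p k = last H0 \<and>
     entry G e2 {fst (p K)} (fst (p K), r) H0 \<and>
     price_upto G p k = price_upto G p K + real (rate G (fst (p K))) * (r - snd (p K))
       + price_upto G (\<lambda>j. H0 ! j) (length H0 - 1)"

lemma bridge_cong:
  assumes "bridge p K k H0" "\<And>i. i \<le> k \<Longrightarrow> q i = p i"
  shows "bridge q K k H0"
proof -
  have "K \<le> k" using assms(1) by (simp add: bridge_def)
  moreover have "price_upto G q k = price_upto G p k" "price_upto G q K = price_upto G p K"
    using assms(2) calculation by (auto intro: price_upto_cong)
  ultimately show ?thesis using assms by (simp add: bridge_def)
qed

lemma bridge_cost:
  assumes B: "bridge p K k H0" and H0: "entry G e2 A (l, r) H0" and pK: "p K = (l, y)"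
    and ng: "\<And>i. i \<le> K \<Longrightarrow> \<not> at_goal G (p i)" and pc: "\<And>i. i \<le> k \<Longrightarrow> pc i = p i"
    and h2: "hist G e2 (l, r) mu2 chi2 (length H0 - 1) = H0"
    and glue: "\<And>j. pc (k + j) = pos G e2 (l, r) mu2 chi2 (length H0 - 1 + j)"
  shows "play_cost G pc = ereal (price_upto G p K + real (rate G l) * (r - y)) + cost G e2 (l, r) mu2 chi2"
  unfolding cost_play_cost
proof (rule play_cost_bridge[where k=k and m="length H0 - 1" and H=H0 and p=p and q="pos G e2 (l, r) mu2 chi2"])
  show "price_upto G p k = price_upto G p K + real (rate G l) * (r - y)
      + price_upto G (\<lambda>j. H0 ! j) (length H0 - 1)" using B pK by (simp add: bridge_def)
  show "pos G e2 (l, r) mu2 chi2 j = H0 ! j" if "j \<le> length H0 - 1" for j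
    using h2 H0 that by (auto simp: entry_def pos_def less_Suc_eq_le le_Suc_eq)
  show "\<not> at_goal G (p i)" if "i < k" for i using ng[of i] B that by (simp add: bridge_def)
  show "\<not> at_goal G (pos G e2 (l, r) mu2 chi2 i)" if "i < length H0 - 1" for i
    using h2 H0 that ng[of K] pK by (auto simp: entry_def pos_def at_goal_def)
qed (use pc glue in auto)

lemma exit_lowered:
  assumes X: "exits_at s mu chi mu' chi' K" and legal: "legal_play G e2 s mu chi"
    and legal': "legal_play G' r (inl_st s) mu' chi'" and s: "snd s \<le> r"
    and lowered: "owner G mu chi (pos G e2 s mu chi K) = lower (owner G' mu' chi' (inl_st (pos G e2 s mu chi K)))"
  shows "bridge (pos G e2 s mu chi) K (if snd (pos G e2 s mu chi K) = r then K else Suc K)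
    [(fst (pos G e2 s mu chi K), r)]"
proof -
  let ?p = "pos G e2 s mu chi" and ?p' = "pos G' r (inl_st s) mu' chi'"
  obtain l y where pK: "?p K = (l, y)" by (cases "?p K")
  note exit = exit_cost[OF X legal' s pK]
  have en: "enabled G e2 (?p K)" and HK: "hist G' r (inl_st s) mu' chi' K = map inl_st (hist G e2 s mu chi K)"
    and ex: "?p' (Suc K) = exit_st (?p K)"
    using X unfolding exits_at_def by auto
  show ?thesis
  proof (cases "y = r")
    case True
    then show ?thesis using pK by (simp add: bridge_def price_upto_def)
  next
    case False
    then have yr: "y < r" using exit(2) by simp
    let ?h = "hist G e2 s mu chi K" and ?\<sigma>' = "owner G' mu' chi' (inl_st (?p K))"
    have en': "enabled G' r (?p' K)" by (rule exits_at_enabled'[OF X])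
    have mv: "?\<sigma>' (map inl_st ?h) = exit_st (?p K)"
      using ex en' pos_map_inl_st[OF HK] HK by (simp add: pos_Suc)
    have "succ G' r (inl_st (?p K)) (exit_st (?p K))"
      using succ'_exit exit(1) pK by simp
    then have "lower ?\<sigma>' ?h = (l, r)"
      using lower_exit[of ?h ?\<sigma>'] mv yr pK by (simp add: last_hist)
    then have "?p (Suc K) = (l, r)" using en lowered by (simp add: pos_Suc)
    then show ?thesis using pK False by (simp add: bridge_def price_upto_Suc price_upto_def)
  qed
qed

text \<open>If the exit was chosen by a lifted strategy, the \<open>G\<close>-play delays beyond \<open>r\<close>; this delay
  splits into waiting until \<open>r\<close> and a first move from \<open>(l, r)\<close>.\<close>

lemma exit_lifted:
  assumes X: "exits_at s mu chi mu' chi' K" and legal: "legal_play G e2 s mu chi"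
    and legal': "legal_play G' r (inl_st s) mu' chi'" and s: "snd s \<le> r"
    and lifted: "owner G' mu' chi' (inl_st (pos G e2 s mu chi K)) = lift (owner G mu chi (pos G e2 s mu chi K))"
  shows "r < snd (pos G e2 s mu chi (Suc K))"
    and "bridge (pos G e2 s mu chi) K (Suc K) [(fst (pos G e2 s mu chi K), r), pos G e2 s mu chi (Suc K)]"
proof -
  let ?p = "pos G e2 s mu chi" and ?p' = "pos G' r (inl_st s) mu' chi'"
  obtain l y where pK: "?p K = (l, y)" by (cases "?p K")
  note exit = exit_cost[OF X legal' s pK]
  have en: "enabled G e2 (?p K)" and HK: "hist G' r (inl_st s) mu' chi' K = map inl_st (hist G e2 s mu chi K)"
    and ex: "?p' (Suc K) = exit_st (?p K)"
    using X unfolding exits_at_def by auto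
  let ?h = "hist G e2 s mu chi K" and ?\<sigma> = "owner G mu chi (?p K)"
  have en': "enabled G' r (?p' K)" by (rule exits_at_enabled'[OF X])
  have mv: "lift ?\<sigma> (map inl_st ?h) = exit_st (?p K)"
    using ex en' pos_map_inl_st[OF HK] HK lifted by (simp add: pos_Suc)
  have nxt: "?p (Suc K) = ?\<sigma> ?h" using en by (simp add: pos_Suc)
  have st: "succ G e2 (?p K) (?p (Suc K))" by (rule legal_play.pos_step[OF legal en])
  show gt: "r < snd (?p (Suc K))"
  proof (rule ccontr)
    assume "\<not> ?thesis"
    then have "lift ?\<sigma> (map inl_st ?h) = inl_st (?\<sigma> ?h)"
      using lift_below[of ?h ?\<sigma>] st nxt by (simp add: last_hist)
    then show False using mv by simp
  qed
  have "fst (?p (Suc K)) = l" "\<not> urgent G l" "snd (?p (Suc K)) \<le> e2"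
    using succ_delay[OF st] gt exit(2) pK by auto
  then have "succ G e2 (l, r) (?p (Suc K))" using gt by (auto simp: succ_def)
  then show "bridge ?p K (Suc K) [(fst (?p K), r), ?p (Suc K)]"
    using pK \<open>fst (?p (Suc K)) = l\<close> by (simp add: bridge_def price_upto_Suc algebra_simps)
       (simp add: price_upto_def algebra_simps)
qed

end

section \<open>The cost-consistent game is at most as expensive\<close>

context split_game
begin

lemma near_best_reply:
  assumes "l \<in> locs G" "min_strat G e2 (l, r) m2" "0 < \<epsilon>"
  shows "\<exists>c. max_strat G e2 (l, r) c \<and> ereal (V l - \<epsilon>) < cost G e2 (l, r) m2 c"
proof -
  have "ereal (V l - \<epsilon>) < OptCost G r e2 (l, r)" using OptCost_V[OF assms(1)] assms(3) by simp
  also have "\<dots> \<le> (SUP c\<in>{c. max_strat G e2 (l, r) c}. cost G e2 (l, r) m2 c)"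
    unfolding OptCost_def by (rule INF_lower) (simp add: assms(2))
  finally show ?thesis by (simp add: less_SUP_iff)
qed

lemma near_optimal_strategy:
  assumes "l \<in> locs G" "0 < \<epsilon>"
  shows "\<exists>m. min_strat G e2 (l, r) m \<and>
    (\<forall>c. max_strat G e2 (l, r) c \<longrightarrow> cost G e2 (l, r) m c < ereal (V l + \<epsilon>))"
proof -
  have "OptCost G r e2 (l, r) < ereal (V l + \<epsilon>)" using OptCost_V[OF assms(1)] assms(2) by simp
  then obtain m where m: "min_strat G e2 (l, r) m"
      and sup: "(SUP c\<in>{c. max_strat G e2 (l, r) c}. cost G e2 (l, r) m c) < ereal (V l + \<epsilon>)"
    unfolding OptCost_def by (auto simp: INF_less_iff)
  have "cost G e2 (l, r) m c < ereal (V l + \<epsilon>)" if "max_strat G e2 (l, r) c" for c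
  proof -
    have "cost G e2 (l, r) m c \<le> (SUP c\<in>{c. max_strat G e2 (l, r) c}. cost G e2 (l, r) m c)"
      by (rule SUP_upper) (simp add: that)
    then show ?thesis using sup by (rule le_less_trans)
  qed
  then show ?thesis using m by blast
qed

lemma max_continuation:
  assumes mu: "min_strat G e2 s mu" and chi1: "max_strat G e2 s chi1"
    and legal: "legal_play G e2 s mu chi1"
    and B: "bridge (pos G e2 s mu chi1) K k H0" and H0: "entry G e2 (Lmin G) (l, r) H0"
    and pK: "pos G e2 s mu chi1 K = (l, y)"
    and ok: "\<And>i. i \<le> K \<Longrightarrow> \<not> at_goal G (pos G e2 s mu chi1 i) \<and> enabled G e2 (pos G e2 s mu chi1 i)"
    and eps: "0 < \<epsilon>"
  shows "\<exists>chi. max_strat G e2 s chi \<and>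
    ereal (V l + (r - y) * real (rate G l) + price_upto G (pos G e2 s mu chi1) K) \<le> cost G e2 s mu chi + ereal \<epsilon>"
proof -
  let ?p = "pos G e2 s mu chi1"
  define P where "P = hist G e2 s mu chi1 k"
  have Kk: "K \<le> k" "k \<le> Suc K" and lastP: "last H0 = last P"
    using B by (simp_all add: bridge_def P_def last_hist)
  have en: "enabled G e2 (?p i)" if "i < k" for i using ok[of i] that Kk by simp
  have lenP: "length P = Suc k" unfolding P_def by (rule hist_length_enabled) (use en in auto)
  have l: "l \<in> locs G" using legal_play.pos_loc[OF legal, of K] pK by simp
  let ?m2 = "resume G e2 H0 P mu"
  have m2: "min_strat G e2 (l, r) ?m2"
    by (rule resume_min[OF mu legal P_def[symmetric] H0 lastP]) (simp add: l)
  obtain c2 where c2: "max_strat G e2 (l, r) c2" "ereal (V l - \<epsilon>) < cost G e2 (l, r) ?m2 c2"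
    using near_best_reply[OF l m2 eps] by blast
  let ?chi = "graft P H0 chi1 c2"
  have chi: "max_strat G e2 s ?chi"
    by (rule graft_max[OF chi1 c2(1) legal_play.start_loc[OF legal] edges_closed _ lastP H0])
       (simp_all add: P_def l)
  have agree: "hist G e2 s mu ?chi n = hist G e2 s mu chi1 n" if "n \<le> k" for n
  proof (rule hist_agree)
    fix i assume "i < n"
    then have "\<not> prefix P (hist G e2 s mu chi1 i)"
      using hist_length[of G e2 s mu chi1 i] lenP that prefix_length_le by fastforce
    then show "owner G mu ?chi (?p i) (hist G e2 s mu chi1 i) = owner G mu chi1 (?p i) (hist G e2 s mu chi1 i)"
      by (simp add: graft_def)
  qed
  let ?p2 = "pos G e2 (l, r) ?m2 c2"
  have h2: "hist G e2 (l, r) ?m2 c2 (length H0 - 1) = H0"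
    by (rule entry_hist[OF H0]) (use H0 in \<open>auto simp: resume_first entry_def\<close>)
  have hk: "hist G e2 s mu ?chi k = P" using agree[of k] by (simp add: P_def)
  have glue: "pos G e2 s mu ?chi (k + j) = ?p2 (length H0 - 1 + j)" for j
    using pos_glue[OF hk entry_ne[OF H0] lastP, of ?m2 c2 "length H0 - 1"] h2 entry_hd[OF H0] by simp
  have "cost G e2 s mu ?chi = ereal (price_upto G ?p K + real (rate G l) * (r - y)) + cost G e2 (l, r) ?m2 c2"
    unfolding cost_play_cost[of G e2 s mu ?chi]
    by (rule bridge_cost[OF B H0 pK _ _ h2 glue]) (use ok agree in \<open>auto simp: pos_def\<close>)
  then have "ereal (V l + (r - y) * real (rate G l) + price_upto G ?p K) \<le> cost G e2 s mu ?chi + ereal \<epsilon>"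
    using c2(2) by (cases "cost G e2 (l, r) ?m2 c2") (simp_all add: algebra_simps)
  then show ?thesis using chi by blast
qed

text \<open>Against the lift of a minimizer strategy \<open>mu\<close>, every maximizer strategy of \<open>G'\<close> achieves at
  most what some maximizer strategy achieves against \<open>mu\<close> in \<open>G\<close> (up to \<open>\<epsilon>\<close>): lower it, and if the
  \<open>G'\<close>-play exits, continue the \<open>G\<close>-play with a near-best reply from \<open>(l, r)\<close>.\<close>

lemma lift_reply:
  assumes s: "fst s \<in> locs G" "snd s \<le> r" and mu: "min_strat G e2 s mu" and eps: "0 < \<epsilon>"
    and chi': "max_strat G' r (inl_st s) chi'"
  shows "\<exists>chi. max_strat G e2 s chi \<and> cost G' r (inl_st s) (lift mu) chi' \<le> cost G e2 s mu chi + ereal \<epsilon>"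
proof -
  let ?chi1 = "lower chi'"
  let ?p = "pos G e2 s mu ?chi1"
  have chi1: "max_strat G e2 s ?chi1" by (rule lower_max[OF chi' s])
  have legal: "legal_play G e2 s mu ?chi1"
    using mu chi1 s(1) by (simp add: legal_play_G min_strat_def max_strat_def)
  have legal': "legal_play G' r (inl_st s) (lift mu) chi'"
    using chi' s(1) by (simp add: legal_play_G' lift_valid max_strat_def)
  have corr: "corresp mu (lift mu)" "corresp ?chi1 chi'" by (simp_all add: corresp_def)
  from corresp_outcome[OF corr legal legal' s(2)] show ?thesis
  proof (elim disjE exE)
    assume "cost G' r (inl_st s) (lift mu) chi' = cost G e2 s mu ?chi1"
    then show ?thesis using chi1 eps
      by (intro exI[of _ ?chi1]) (cases "cost G e2 s mu ?chi1"; simp add: cost_not_minf)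
  next
    fix K assume X: "exits_at s mu ?chi1 (lift mu) chi' K"
    obtain l y where pK: "?p K = (l, y)" by (cases "?p K")
    have ok: "\<not> at_goal G (?p i) \<and> enabled G e2 (?p i)" if "i \<le> K" for i
      using X that by (simp add: exits_at_def)
    obtain k H0 where B: "bridge ?p K k H0" and H0: "entry G e2 (Lmin G) (l, r) H0"
    proof (cases "l \<in> Lmin G")
      case True
      have "bridge ?p K (Suc K) [(l, r), ?p (Suc K)]"
        using exit_lifted(2)[OF X legal legal' s(2)] True pK by simp
      moreover have "entry G e2 (Lmin G) (l, r) [(l, r), ?p (Suc K)]"
        using calculation True pK by (simp add: bridge_def)
      ultimately show ?thesis using that by blast
    next
      case False
      have "bridge ?p K (if y = r then K else Suc K) [(l, r)]"
        using exit_lowered[OF X legal legal' s(2)] False pK by simp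
      then show ?thesis using that by simp
    qed
    obtain chi where "max_strat G e2 s chi"
        "ereal (V l + (r - y) * real (rate G l) + price_upto G ?p K) \<le> cost G e2 s mu chi + ereal \<epsilon>"
      using max_continuation[OF mu chi1 legal B H0 pK ok eps] by blast
    then show ?thesis using exit_cost(3)[OF X legal' s(2) pK] by auto
  qed
qed

lemma OptCost_G'_le:
  assumes s: "fst s \<in> locs G" "snd s \<le> r"
  shows "OptCost G' b r (inl_st s) \<le> OptCost G b' e2 s"
  unfolding OptCost_def[of G b' e2]
proof (rule INF_greatest)
  fix mu assume mu: "mu \<in> {mu. min_strat G e2 s mu}"
  let ?sup = "SUP chi\<in>{chi. max_strat G e2 s chi}. cost G e2 s mu chi"
  show "OptCost G' b r (inl_st s) \<le> ?sup"
  proof (rule ereal_le_epsilon2)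
    fix \<epsilon> :: real assume eps: "0 < \<epsilon>"
    have "OptCost G' b r (inl_st s) \<le> (SUP c'\<in>{c. max_strat G' r (inl_st s) c}. cost G' r (inl_st s) (lift mu) c')"
      unfolding OptCost_def by (rule INF_lower) (use lift_min mu s in simp)
    also have "\<dots> \<le> ?sup + ereal \<epsilon>"
    proof (rule SUP_least)
      fix c' assume "c' \<in> {c. max_strat G' r (inl_st s) c}"
      then obtain chi where chi: "max_strat G e2 s chi"
          and le: "cost G' r (inl_st s) (lift mu) c' \<le> cost G e2 s mu chi + ereal \<epsilon>"
        using lift_reply[OF s _ eps] mu by auto
      have "cost G e2 s mu chi \<le> ?sup" by (rule SUP_upper) (simp add: chi)
      then show "cost G' r (inl_st s) (lift mu) c' \<le> ?sup + ereal \<epsilon>"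
        using le by (simp add: add_right_mono order_trans)
    qed
    finally show "OptCost G' b r (inl_st s) \<le> ?sup + ereal \<epsilon>" .
  qed
qed

end

section \<open>The switching strategy\<close>

context split_game
begin

text \<open>For the converse inequality the minimizer of \<open>G\<close> plays the lowered strategy \<open>lower m'\<close> until
  the history shows that the \<open>G'\<close>-play would have exited: either \<open>m'\<close> exits at a minimizer location
  (an exit point), or the maximizer delays beyond \<open>r\<close> (a crossing point).  From then on it plays a
  near-optimal strategy \<open>m2 l\<close> for \<open>(l, r)\<close>, fed with the entry history at \<open>(l, r)\<close>.\<close>

definition exit_at :: "('l + 'l) strategy \<Rightarrow> 'l state list \<Rightarrow> nat \<Rightarrow> bool" where
  "exit_at m' h i \<longleftrightarrow> i < length h \<and> fst (h ! i) \<in> Lmin G \<and> snd (h ! i) \<le> r \<and>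
      \<not> isl (fst (m' (map inl_st (take (Suc i) h))))"

definition cross_at :: "'l state list \<Rightarrow> nat \<Rightarrow> bool" where
  "cross_at h i \<longleftrightarrow> Suc i < length h \<and> fst (h ! i) \<notin> Lmin G \<and> snd (h ! i) \<le> r \<and> r < snd (h ! Suc i)"

definition switch_at :: "('l + 'l) strategy \<Rightarrow> 'l state list \<Rightarrow> nat \<Rightarrow> bool" where
  "switch_at m' h i \<longleftrightarrow> exit_at m' h i \<or> cross_at h i"

definition first_switch :: "('l + 'l) strategy \<Rightarrow> 'l state list \<Rightarrow> nat" where
  "first_switch m' h = (LEAST i. switch_at m' h i)"

text \<open>The length of the history prefix replaced at a switch point \<open>i\<close>, and its replacement.\<close>

definition switch_len :: "('l + 'l) strategy \<Rightarrow> 'l state list \<Rightarrow> nat \<Rightarrow> nat" where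
  "switch_len m' h i = (if exit_at m' h i \<and> snd (h ! i) = r then Suc i else Suc (Suc i))"

definition switch_entry :: "('l + 'l) strategy \<Rightarrow> 'l state list \<Rightarrow> nat \<Rightarrow> 'l state list" where
  "switch_entry m' h i = (if exit_at m' h i then [(fst (h ! i), r)] else [(fst (h ! i), r), h ! Suc i])"

definition switched :: "('l + 'l) strategy \<Rightarrow> 'l state list \<Rightarrow> bool" where
  "switched m' h \<longleftrightarrow> (\<exists>i. switch_at m' h i) \<and> switch_len m' h (first_switch m' h) \<le> length h \<and>
    last (take (switch_len m' h (first_switch m' h)) h) = last (switch_entry m' h (first_switch m' h))"

definition switch_strat :: "('l + 'l) strategy \<Rightarrow> ('l \<Rightarrow> 'l strategy) \<Rightarrow> 'l strategy" where
  "switch_strat m' m2 h = (if switched m' h then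
      m2 (fst (h ! first_switch m' h))
        (switch_entry m' h (first_switch m' h) @ drop (switch_len m' h (first_switch m' h)) h)
    else lower m' h)"

lemma switch_entry_ne [simp]: "switch_entry m' h i \<noteq> []"
  by (simp add: switch_entry_def)

lemma first_switch_less_len: "first_switch m' h < switch_len m' h (first_switch m' h)"
  by (simp add: switch_len_def)

lemma switch_strat_valid:
  assumes "\<And>l. valid_strat G e2 (Lmin G) (m2 l)"
  shows "valid_strat G e2 (Lmin G) (switch_strat m' m2)"
  unfolding valid_strat_def
proof (intro allI impI)
  fix h :: "'l state list" assume h: "h \<noteq> [] \<and> fst (last h) \<in> Lmin G \<and> (\<exists>s'. succ G e2 (last h) s')"
  show "succ G e2 (last h) (switch_strat m' m2 h)"
  proof (cases "switched m' h")
    case True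
    let ?i = "first_switch m' h" let ?n = "switch_len m' h ?i" let ?H = "switch_entry m' h ?i"
    have n: "?n \<le> length h" "last (take ?n h) = last ?H" using True by (auto simp: switched_def)
    have L: "last (?H @ drop ?n h) = last h"
      using n by (cases "?n = length h") (simp_all add: last_drop)
    have "succ G e2 (last (?H @ drop ?n h)) (m2 (fst (h ! ?i)) (?H @ drop ?n h))"
      using assms[of "fst (h ! ?i)"] L h unfolding valid_strat_def by (metis append_is_Nil_conv switch_entry_ne)
    then show ?thesis using True L by (simp add: switch_strat_def)
  next
    case False
    then show ?thesis using lower_valid[of "Lmin G" m'] h unfolding valid_strat_def by (simp add: switch_strat_def)
  qed
qed

text \<open>Whether a prefix is switched is decided by the prefix up to the switch point, so after the
  switch the strategy plays \<open>m2 l\<close> on the entry history followed by the rest of the play.\<close>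

lemma switch_strat_after:
  assumes M: "switched m' h"
  shows "switch_strat m' m2 (take (switch_len m' h (first_switch m' h)) h @ t) =
         m2 (fst (h ! first_switch m' h)) (switch_entry m' h (first_switch m' h) @ t)"
proof -
  let ?i = "first_switch m' h" let ?n = "switch_len m' h ?i" let ?H = "switch_entry m' h ?i"
  let ?P = "take ?n h" let ?g = "?P @ t"
  have ex: "\<exists>i. switch_at m' h i" and nl: "?n \<le> length h" and lst: "last ?P = last ?H"
    using M by (auto simp: switched_def)
  have swi: "switch_at m' h ?i" unfolding first_switch_def using ex by (rule LeastI_ex)
  have nsw: "\<not> switch_at m' h j" if "j < ?i" for j using that unfolding first_switch_def by (rule not_less_Least)
  have lenP: "length ?P = ?n" using nl by simp
  have iln: "?i < ?n" by (rule first_switch_less_len)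
  have gnth: "?g ! k = h ! k" if "k < ?n" for k using that lenP nl by (simp add: nth_append)
  have gtake: "take (Suc j) ?g = take (Suc j) h" if "Suc j \<le> ?n" for j
    using that lenP by (simp add: take_append min_def)
  have exeq: "exit_at m' ?g j = exit_at m' h j" if "j \<le> ?i" for j
  proof -
    have "j < ?n" using that iln by simp
    then show ?thesis using gnth[of j] gtake[of j] lenP nl unfolding exit_at_def by auto
  qed
  have creq: "cross_at ?g j = cross_at h j" if "j < ?i" for j
  proof -
    have "Suc j < ?n" using that iln by (simp add: switch_len_def split: if_splits)
    then show ?thesis using gnth[of j] gnth[of "Suc j"] lenP nl unfolding cross_at_def by auto
  qed
  have n2: "?n = Suc (Suc ?i)" if "\<not> exit_at m' h ?i" using that by (simp add: switch_len_def)
  have swg: "switch_at m' ?g ?i"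
  proof (cases "exit_at m' h ?i")
    case True
    then show ?thesis using exeq[of ?i] by (simp add: switch_at_def)
  next
    case False
    then have "cross_at h ?i" using swi by (simp add: switch_at_def)
    then have "cross_at ?g ?i" using gnth[of ?i] gnth[of "Suc ?i"] n2[OF False] lenP unfolding cross_at_def by auto
    then show ?thesis by (simp add: switch_at_def)
  qed
  have nswg: "\<not> switch_at m' ?g j" if "j < ?i" for j
    using nsw[OF that] exeq[of j] creq[OF that] that by (simp add: switch_at_def)
  have i0: "first_switch m' ?g = ?i" unfolding first_switch_def[of m' ?g]
    by (rule Least_equality) (use swg nswg in \<open>auto simp: not_less[symmetric]\<close>)
  have exi: "exit_at m' ?g ?i = exit_at m' h ?i" by (rule exeq) simp
  have gi: "?g ! ?i = h ! ?i" using iln by (rule gnth)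
  have ng: "switch_len m' ?g ?i = ?n" using exi gi by (simp add: switch_len_def)
  have Hg: "switch_entry m' ?g ?i = ?H"
    using exi gi gnth[of "Suc ?i"] n2 by (cases "exit_at m' h ?i") (simp_all add: switch_entry_def)
  have "switched m' ?g" unfolding switched_def using swg i0 ng Hg lst lenP by auto
  moreover have "drop ?n ?g = t" using lenP by simp
  ultimately show ?thesis using i0 ng Hg gi by (simp add: switch_strat_def)
qed

lemma switched_hist:
  assumes legal: "legal_play G e2 s mu chi" and M: "switched m' (hist G e2 s mu chi k)"
  defines "h \<equiv> hist G e2 s mu chi k"
  shows "\<exists>k0. hist G e2 s mu chi k0 = take (switch_len m' h (first_switch m' h)) h"
    and "entry G e2 (Lmax G) (fst (h ! first_switch m' h), r) (switch_entry m' h (first_switch m' h))"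
    and "last (switch_entry m' h (first_switch m' h)) = last (take (switch_len m' h (first_switch m' h)) h)"
    and "fst (h ! first_switch m' h) \<in> locs G"
proof -
  let ?i = "first_switch m' h" let ?n = "switch_len m' h ?i" let ?H = "switch_entry m' h ?i"
  let ?l = "fst (h ! ?i)" and ?P = "take ?n h"
  have nl: "?n \<le> length h" and ex: "\<exists>i. switch_at m' h i" and lst: "last ?P = last ?H"
    using M by (auto simp: switched_def h_def)
  show "last ?H = last ?P" using lst by simp
  have swi: "switch_at m' h ?i" unfolding first_switch_def using ex by (rule LeastI_ex)
  have iln: "?i < ?n" by (rule first_switch_less_len)
  have Pne: "?P \<noteq> []" using iln by (simp add: h_def)
  have "prefix ?P (hist G e2 s mu chi k)" unfolding h_def by (rule take_is_prefix)
  then show k0: "\<exists>k0. hist G e2 s mu chi k0 = ?P"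
    using prefix_hist[OF _ Pne] by blast
  have loc: "fst x \<in> locs G" if "x \<in> set h" for x
    using legal_play.hist_loc[OF legal] that by (simp add: h_def)
  show "?l \<in> locs G" using loc iln nl by simp
  show "entry G e2 (Lmax G) (?l, r) ?H"
  proof (cases "exit_at m' h ?i")
    case True
    then show ?thesis by (simp add: switch_entry_def)
  next
    case False
    then have c: "cross_at h ?i" using swi by (simp add: switch_at_def)
    have n2: "?n = Suc (Suc ?i)" using False by (simp add: switch_len_def)
    obtain k0 where k0: "hist G e2 s mu chi k0 = ?P" using k0 by blast
    have lP: "length ?P = Suc (Suc ?i)" using n2 nl by simp
    have "take (Suc ?i) ?P \<noteq> ?P"
    proof
      assume "take (Suc ?i) ?P = ?P"
      then have "length (take (Suc ?i) ?P) = length ?P" by simp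
      then show False using lP by simp
    qed
    then have sp: "strict_prefix (take (Suc ?i) ?P) ?P"
      unfolding strict_prefix_def using take_is_prefix by blast
    have "succ G e2 (last (take (Suc ?i) ?P)) (?P ! length (take (Suc ?i) ?P))"
      by (rule legal_play.prefix_succ[OF legal k0 sp]) (simp add: n2 h_def switch_len_def)
    moreover have "last (take (Suc ?i) ?P) = h ! ?i"
      using n2 nl by (simp add: take_Suc_conv_app_nth min_def)
    moreover have "?P ! length (take (Suc ?i) ?P) = h ! Suc ?i"
      using n2 nl by (simp add: min_def)
    ultimately have sc: "succ G e2 (h ! ?i) (h ! Suc ?i)" by simp
    have inc: "snd (h ! ?i) < snd (h ! Suc ?i)" using c unfolding cross_at_def by simp
    have "fst (h ! Suc ?i) = ?l" "\<not> urgent G ?l" "snd (h ! Suc ?i) \<le> e2"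
      using succ_delay[OF sc inc] by auto
    then have "succ G e2 (?l, r) (h ! Suc ?i)" using c unfolding succ_def cross_at_def by (cases "h ! Suc ?i") auto
    moreover have "?l \<in> Lmax G"
      using c loc[of "h ! ?i"] iln nl unfolding cross_at_def by (simp add: locs_def)
    ultimately show ?thesis using False by (simp add: switch_entry_def)
  qed
qed

text \<open>The switching strategy is non-zeno: before a switch it is the lowered non-zeno strategy,
  after a switch it continues like the non-zeno strategy \<open>m2 l\<close>.\<close>

lemma switch_strat_min:
  assumes mu': "min_strat G' r (inl_st s) m'" and s: "fst s \<in> locs G" "snd s \<le> r"
    and m2: "\<And>l. l \<in> locs G \<Longrightarrow> min_strat G e2 (l, r) (m2 l)"
    and m2v: "\<And>l. valid_strat G e2 (Lmin G) (m2 l)"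
  shows "min_strat G e2 s (switch_strat m' m2)"
proof -
  let ?mu = "switch_strat m' m2"
  have v: "valid_strat G e2 (Lmin G) ?mu" by (rule switch_strat_valid[OF m2v])
  moreover have "\<not> zeno_tail G e2 s ?mu chi (Lmin G)" if chi: "valid_strat G e2 (Lmax G) chi" for chi
  proof
    assume Z: "zeno_tail G e2 s ?mu chi (Lmin G)"
    have legal: "legal_play G e2 s ?mu chi" using v chi s(1) by (rule legal_play_G)
    show False
    proof (cases "\<exists>k. switched m' (hist G e2 s ?mu chi k)")
      case True
      then obtain k where M: "switched m' (hist G e2 s ?mu chi k)" by blast
      let ?h = "hist G e2 s ?mu chi k"
      let ?i = "first_switch m' ?h" let ?H = "switch_entry m' ?h ?i" let ?l = "fst (?h ! ?i)"
      let ?P = "take (switch_len m' ?h ?i) ?h"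
      obtain k0 where k0: "hist G e2 s ?mu chi k0 = ?P" using switched_hist(1)[OF legal M] by blast
      note H0 = switched_hist(2)[OF legal M] and lst = switched_hist(3)[OF legal M]
      have l: "?l \<in> locs G" by (rule switched_hist(4)[OF legal M])
      let ?c2 = "resume G e2 ?H ?P chi"
      have c2v: "valid_strat G e2 (Lmax G) ?c2"
        by (rule graft_valid[OF entry_replay_valid[OF H0] chi]) (use lst k0 in \<open>auto simp: switch_len_def\<close>)
      have h2: "hist G e2 (?l, r) (m2 ?l) ?c2 (length ?H - 1) = ?H"
        by (rule entry_hist[OF H0]) (use H0 players_disjoint in \<open>auto simp: resume_first entry_def\<close>)
      have "zeno_tail G e2 (?l, r) (m2 ?l) ?c2 (Lmin G)"
        using zeno_glue[OF legal _ k0 h2 entry_ne[OF H0] entry_hd[OF H0] lst] Z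
          switch_strat_after[OF M] legal_play_G[OF m2v c2v] l by simp
      then show False using m2[OF l] c2v by (simp add: min_strat_def)
    next
      case False
      then have "hist G e2 s (lower m') chi n = hist G e2 s ?mu chi n" for n
        by (intro hist_agree) (auto simp: switch_strat_def)
      then have "zeno_tail G e2 s (lower m') chi (Lmin G)" using Z by (simp add: zeno_tail_def pos_def)
      then show False using lower_min[OF mu' s] chi by (simp add: min_strat_def)
    qed
  qed
  ultimately show ?thesis by (simp add: min_strat_def)
qed

end

section \<open>The original game is at most as expensive\<close>

context split_game
begin

text \<open>Before the first event of the play of \<open>lower m'\<close> against \<open>chi\<close> (compared with \<open>m'\<close> against
  \<open>lift chi\<close>) no switch point occurs: the moves of \<open>m'\<close> do not exit and the clock stays \<open>\<le> r\<close>.\<close>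

lemma no_switch_before:
  assumes legal: "legal_play G e2 s (lower m') chi" and legal': "legal_play G' r (inl_st s) m' (lift chi)"
    and s: "snd s \<le> r"
    and H: "\<forall>n\<le>K. hist G' r (inl_st s) m' (lift chi) n = map inl_st (hist G e2 s (lower m') chi n)"
    and before: "\<forall>i<K. \<not> at_goal G (pos G e2 s (lower m') chi i) \<and> enabled G e2 (pos G e2 s (lower m') chi i) \<and>
        isl (fst (pos G' r (inl_st s) m' (lift chi) (Suc i)))"
    and en: "\<And>i'. i' < i \<Longrightarrow> enabled G e2 (pos G e2 s (lower m') chi i')"
    and j: "j < K" "j \<le> i"
  shows "\<not> switch_at m' (hist G e2 s (lower m') chi i) j"
proof -
  let ?p = "pos G e2 s (lower m') chi" and ?p' = "pos G' r (inl_st s) m' (lift chi)"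
  let ?h = "hist G e2 s (lower m') chi i"
  have PK: "?p' n = inl_st (?p n)" if "n \<le> K" for n using H that by (simp add: pos_map_inl_st)
  have le_r: "snd (?p n) \<le> r" if "n \<le> K" for n
    using legal_play.clock_bound[OF legal', of n] s PK[OF that] by simp
  have tj: "take (Suc j) ?h = hist G e2 s (lower m') chi j" "?h ! j = ?p j"
    using hist_take_pos[OF en j(2)] by blast+
  have "\<not> exit_at m' ?h j"
  proof
    assume ex: "exit_at m' ?h j"
    have "enabled G' r (inl_st (?p j))"
      using enabled_upto_r[OF _ le_r legal_play.pos_loc[OF legal]] before j(1) by (simp add: at_goal_def)
    then have "?p' (Suc j) = m' (map inl_st (hist G e2 s (lower m') chi j))"
      using ex tj PK[of j] H j(1) by (simp add: pos_Suc exit_at_def)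
    moreover have "isl (fst (?p' (Suc j)))" using before j(1) by blast
    ultimately show False using ex tj by (simp add: exit_at_def)
  qed
  moreover have "\<not> cross_at ?h j"
  proof
    assume cr: "cross_at ?h j"
    then have "Suc j \<le> i" using hist_length[of G e2 s "lower m'" chi i] by (simp add: cross_at_def)
    then have "?h ! Suc j = ?p (Suc j)" using hist_take_pos(2)[OF en] by blast
    then show False using cr le_r[of "Suc j"] j(1) by (simp add: cross_at_def)
  qed
  ultimately show ?thesis by (simp add: switch_at_def)
qed

lemma not_switched_before:
  assumes legal: "legal_play G e2 s (lower m') chi" and legal': "legal_play G' r (inl_st s) m' (lift chi)"
    and s: "snd s \<le> r"
    and H: "\<forall>n\<le>K. hist G' r (inl_st s) m' (lift chi) n = map inl_st (hist G e2 s (lower m') chi n)"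
    and before: "\<forall>i<K. \<not> at_goal G (pos G e2 s (lower m') chi i) \<and> enabled G e2 (pos G e2 s (lower m') chi i) \<and>
        isl (fst (pos G' r (inl_st s) m' (lift chi) (Suc i)))"
    and i: "i < K"
  shows "\<not> switched m' (hist G e2 s (lower m') chi i)"
proof
  assume "switched m' (hist G e2 s (lower m') chi i)"
  then obtain j where sw: "switch_at m' (hist G e2 s (lower m') chi i) j" by (auto simp: switched_def)
  then have "j \<le> i"
    using hist_length[of G e2 s "lower m'" chi i] by (auto simp: switch_at_def exit_at_def cross_at_def)
  then show False
    using no_switch_before[OF legal legal' s H before _, of i j] sw before i by auto
qed

lemma switch_strat_agrees:
  assumes "\<And>i. i < n \<Longrightarrow> enabled G e2 (pos G e2 s (lower m') chi i) \<Longrightarrow> \<not> switched m' (hist G e2 s (lower m') chi i)"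
  shows "hist G e2 s (switch_strat m' m2) chi n = hist G e2 s (lower m') chi n"
  by (rule hist_agree) (use assms in \<open>auto simp: switch_strat_def\<close>)

lemma min_continuation:
  assumes chi: "max_strat G e2 s chi" and legal: "legal_play G e2 s mu chi"
    and B: "bridge (pos G e2 s mu chi) K k H0" and H0: "entry G e2 (Lmax G) (l, r) H0"
    and pK: "pos G e2 s mu chi K = (l, y)"
    and ok: "\<And>i. i \<le> K \<Longrightarrow> \<not> at_goal G (pos G e2 s mu chi i) \<and> enabled G e2 (pos G e2 s mu chi i)"
    and after: "\<And>t. mu (hist G e2 s mu chi k @ t) = m2 (H0 @ t)"
    and m2: "min_strat G e2 (l, r) m2" "\<And>c. max_strat G e2 (l, r) c \<Longrightarrow> cost G e2 (l, r) m2 c < ereal (V l + \<epsilon>)"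
  shows "cost G e2 s mu chi \<le>
    ereal (V l + (r - y) * real (rate G l) + price_upto G (pos G e2 s mu chi) K) + ereal \<epsilon>"
proof -
  let ?p = "pos G e2 s mu chi"
  define P where "P = hist G e2 s mu chi k"
  have lastP: "last H0 = last P" using B by (simp add: bridge_def P_def last_hist)
  have l: "l \<in> locs G" using legal_play.pos_loc[OF legal, of K] pK by simp
  let ?c2 = "resume G e2 H0 P chi"
  have c2: "max_strat G e2 (l, r) ?c2"
    by (rule resume_max[OF chi legal players_disjoint P_def[symmetric] H0 lastP]) (simp add: l)
  let ?p2 = "pos G e2 (l, r) m2 ?c2"
  have h2: "hist G e2 (l, r) m2 ?c2 (length H0 - 1) = H0"
    by (rule entry_hist[OF H0]) (use H0 players_disjoint in \<open>auto simp: resume_first entry_def\<close>)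
  have glue: "?p (k + j) = ?p2 (length H0 - 1 + j)" for j
    using pos_glue[OF P_def[symmetric] entry_ne[OF H0] lastP, of m2 ?c2 "length H0 - 1"] h2
      entry_hd[OF H0] after by (simp add: P_def)
  have "cost G e2 s mu chi = ereal (price_upto G ?p K + real (rate G l) * (r - y)) + cost G e2 (l, r) m2 ?c2"
    unfolding cost_play_cost[of G e2 s mu chi] by (rule bridge_cost[OF B H0 pK _ _ h2 glue]) (use ok in auto)
  then show ?thesis
    using m2(2)[OF c2] by (cases "cost G e2 (l, r) m2 ?c2") (simp_all add: algebra_simps)
qed

lemma switch_at_less_length: "switch_at m' h j \<Longrightarrow> j < length h"
  by (auto simp: switch_at_def exit_at_def cross_at_def)

lemma first_switch_eq: "switch_at m' h K \<Longrightarrow> (\<And>j. j < K \<Longrightarrow> \<not> switch_at m' h j) \<Longrightarrow> first_switch m' h = K"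
  unfolding first_switch_def by (rule Least_equality) (auto simp: not_less[symmetric])

context
  fixes s :: "'l state" and m' :: "('l + 'l) strategy" and chi :: "'l strategy" and K :: nat
  assumes legal: "legal_play G e2 s (lower m') chi" and legal': "legal_play G' r (inl_st s) m' (lift chi)"
    and s_le: "snd s \<le> r" and X: "exits_at s (lower m') chi m' (lift chi) K"
    and before: "\<forall>i<K. \<not> at_goal G (pos G e2 s (lower m') chi i) \<and> enabled G e2 (pos G e2 s (lower m') chi i) \<and>
        isl (fst (pos G' r (inl_st s) m' (lift chi) (Suc i)))"
begin

lemma exit_ok: "i \<le> K \<Longrightarrow> \<not> at_goal G (pos G e2 s (lower m') chi i) \<and> enabled G e2 (pos G e2 s (lower m') chi i)"
  using X by (simp add: exits_at_def)

lemma exit_hist_length: "k \<le> Suc K \<Longrightarrow> length (hist G e2 s (lower m') chi k) = Suc k"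
  by (rule hist_length_enabled) (use exit_ok in auto)

lemma exit_hist_take:
  assumes "K \<le> k" "k \<le> Suc K"
  shows "take (Suc K) (hist G e2 s (lower m') chi k) = hist G e2 s (lower m') chi K"
    and "hist G e2 s (lower m') chi k ! K = pos G e2 s (lower m') chi K"
  using hist_take_pos[OF _ assms(1), of G e2 s "lower m'" chi] exit_ok assms(2) by auto

lemma exit_no_switch: "j < K \<Longrightarrow> j \<le> i \<Longrightarrow> i \<le> Suc K \<Longrightarrow> \<not> switch_at m' (hist G e2 s (lower m') chi i) j"
  by (rule no_switch_before[OF legal legal' s_le _ before]) (use X exit_ok in \<open>auto simp: exits_at_def\<close>)

lemma exit_switch_only_K: "switch_at m' (hist G e2 s (lower m') chi K) j \<Longrightarrow> j = K"
  using switch_at_less_length exit_hist_length[of K] exit_no_switch[of j K] by fastforce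

text \<open>An exit chosen by the minimizer is an exit point; the switch happens after the delay to \<open>r\<close>
  that replaces the exit (if the clock is not yet \<open>r\<close>).\<close>

lemma exit_switch_min:
  assumes Lmin: "fst (pos G e2 s (lower m') chi K) \<in> Lmin G"
  defines "k \<equiv> if snd (pos G e2 s (lower m') chi K) = r then K else Suc K"
  shows "bridge (pos G e2 s (lower m') chi) K k [(fst (pos G e2 s (lower m') chi K), r)]"
    and "switch_at m' (hist G e2 s (lower m') chi k) K"
    and "switch_len m' (hist G e2 s (lower m') chi k) K = Suc k"
    and "switch_entry m' (hist G e2 s (lower m') chi k) K = [(fst (pos G e2 s (lower m') chi K), r)]"
    and "k = Suc K \<Longrightarrow> \<not> switched m' (hist G e2 s (lower m') chi K)"
proof -
  let ?p = "pos G e2 s (lower m') chi" and ?hist = "hist G e2 s (lower m') chi"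
  obtain l y where pK: "?p K = (l, y)" by (cases "?p K")
  have Kk: "K \<le> k" "k \<le> Suc K" by (simp_all add: k_def)
  have "pos G' r (inl_st s) m' (lift chi) (Suc K) = m' (map inl_st (?hist K))"
    using exits_at_enabled'[OF X] exits_at_pos[OF X, of K] X Lmin pK by (simp add: pos_Suc exits_at_def)
  then have "\<not> isl (fst (m' (map inl_st (?hist K))))" using X pK by (simp add: exits_at_def)
  then have ex: "exit_at m' (?hist k) K"
    using exit_hist_take[OF Kk] exit_hist_length[OF Kk(2)] Kk Lmin exit_cost(2)[OF X legal' s_le pK] pK
    by (simp add: exit_at_def)
  then show "switch_at m' (?hist k) K" by (simp add: switch_at_def)
  show "switch_len m' (?hist k) K = Suc k" "switch_entry m' (?hist k) K = [(fst (?p K), r)]"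
    using ex exit_hist_take[OF Kk] pK by (auto simp: switch_len_def switch_entry_def k_def)
  show "bridge ?p K k [(fst (?p K), r)]"
    using exit_lowered[OF X legal legal' s_le] Lmin by (simp add: k_def)
  show "\<not> switched m' (?hist K)" if "k = Suc K"
  proof
    assume M: "switched m' (?hist K)"
    then obtain j where "switch_at m' (?hist K) j" by (auto simp: switched_def)
    then have "switch_at m' (?hist K) K" using exit_switch_only_K by blast
    then have "first_switch m' (?hist K) = K" using exit_switch_only_K by (intro first_switch_eq) auto
    moreover have "?hist K ! K = (l, y)" "y \<noteq> r"
      using exit_hist_take[of K] pK that by (simp_all add: k_def split: if_splits)
    ultimately show False using M exit_hist_length[of K] by (simp add: switched_def switch_len_def)
  qed
qed

text \<open>An exit chosen for the maximizer by the lifted strategy comes from a delay beyond \<open>r\<close> in \<open>G\<close>,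
  which is a crossing point.\<close>

lemma exit_switch_max:
  assumes Lmin: "fst (pos G e2 s (lower m') chi K) \<notin> Lmin G"
  defines "H0 \<equiv> [(fst (pos G e2 s (lower m') chi K), r), pos G e2 s (lower m') chi (Suc K)]"
  shows "bridge (pos G e2 s (lower m') chi) K (Suc K) H0"
    and "entry G e2 (Lmax G) (fst (pos G e2 s (lower m') chi K), r) H0"
    and "switch_at m' (hist G e2 s (lower m') chi (Suc K)) K"
    and "switch_len m' (hist G e2 s (lower m') chi (Suc K)) K = Suc (Suc K)"
    and "switch_entry m' (hist G e2 s (lower m') chi (Suc K)) K = H0"
    and "\<not> switched m' (hist G e2 s (lower m') chi K)"
proof -
  let ?p = "pos G e2 s (lower m') chi" and ?hist = "hist G e2 s (lower m') chi"
  have "owner G' m' (lift chi) (inl_st (?p K)) = lift (owner G (lower m') chi (?p K))"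
    using Lmin by simp
  note lifted = exit_lifted[OF X legal legal' s_le this]
  have nth: "?hist (Suc K) ! Suc K = ?p (Suc K)"
    using hist_take_pos(2)[of "Suc K" G e2 s "lower m'" chi "Suc K"] exit_ok by (simp add: less_Suc_eq_le)
  have cr: "cross_at (?hist (Suc K)) K"
    using exit_hist_take[of "Suc K"] exit_hist_length[of "Suc K"] nth Lmin lifted(1)
      exit_cost(2)[OF X legal' s_le] by (cases "?p K") (simp add: cross_at_def)
  have nex: "\<not> exit_at m' (?hist (Suc K)) K" using Lmin exit_hist_take[of "Suc K"] by (simp add: exit_at_def)
  show "switch_at m' (?hist (Suc K)) K" using cr by (simp add: switch_at_def)
  show "switch_len m' (?hist (Suc K)) K = Suc (Suc K)" using nex by (simp add: switch_len_def)
  show "switch_entry m' (?hist (Suc K)) K = H0"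
    using nex exit_hist_take[of "Suc K"] nth by (simp add: switch_entry_def H0_def)
  show B: "bridge ?p K (Suc K) H0" using lifted(2) by (simp add: H0_def)
  then show "entry G e2 (Lmax G) (fst (?p K), r) H0"
    using Lmin legal_play.pos_loc[OF legal, of K] by (simp add: bridge_def locs_def H0_def)
  show "\<not> switched m' (?hist K)"
  proof
    assume "switched m' (?hist K)"
    then obtain j where "switch_at m' (?hist K) j" by (auto simp: switched_def)
    then have "switch_at m' (?hist K) K" using exit_switch_only_K by blast
    then show False
      using Lmin exit_hist_take[of K] exit_hist_length[of K] by (simp add: switch_at_def exit_at_def cross_at_def)
  qed
qed

lemma switch_at_exit:
  obtains k H0 where "bridge (pos G e2 s (lower m') chi) K k H0"
    and "entry G e2 (Lmax G) (fst (pos G e2 s (lower m') chi K), r) H0"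
    and "\<And>t. switch_strat m' m2 (hist G e2 s (lower m') chi k @ t) = m2 (fst (pos G e2 s (lower m') chi K)) (H0 @ t)"
    and "\<And>i. i < k \<Longrightarrow> \<not> switched m' (hist G e2 s (lower m') chi i)"
proof -
  let ?p = "pos G e2 s (lower m') chi" and ?hist = "hist G e2 s (lower m') chi"
  obtain k H0 where B: "bridge ?p K k H0" and E: "entry G e2 (Lmax G) (fst (?p K), r) H0"
    and swK: "switch_at m' (?hist k) K" and lenK: "switch_len m' (?hist k) K = Suc k"
    and entK: "switch_entry m' (?hist k) K = H0"
    and nK: "k = Suc K \<Longrightarrow> \<not> switched m' (?hist K)"
  proof (cases "fst (?p K) \<in> Lmin G")
    case True
    then show ?thesis using that[OF exit_switch_min(1)] exit_switch_min(2-5) by simp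
  next
    case False
    then show ?thesis using that[OF exit_switch_max(1,2)] exit_switch_max(3-6) by simp
  qed
  have Kk: "K \<le> k" "k \<le> Suc K" using B by (simp_all add: bridge_def)
  have first: "first_switch m' (?hist k) = K"
    by (rule first_switch_eq[OF swK]) (use exit_no_switch Kk in auto)
  have M: "switched m' (?hist k)"
    unfolding switched_def first
    using swK lenK entK exit_hist_length[OF Kk(2)] B by (auto simp: bridge_def last_hist)
  show ?thesis
  proof (rule that[OF B E])
    show "switch_strat m' m2 (?hist k @ t) = m2 (fst (?p K)) (H0 @ t)" for t
      using switch_strat_after[OF M, of m2 t] first lenK entK exit_hist_length[OF Kk(2)] exit_hist_take[OF Kk]
      by simp
    show "\<not> switched m' (?hist i)" if "i < k" for i
    proof (cases "i < K")
      case True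
      moreover have "\<forall>n\<le>K. hist G' r (inl_st s) m' (lift chi) n = map inl_st (?hist n)"
        using X by (simp add: exits_at_def)
      ultimately show ?thesis using not_switched_before[OF legal legal' s_le _ before] by blast
    next
      case False
      then have "i = K" "k = Suc K" using that Kk by auto
      then show ?thesis using nK by simp
    qed
  qed
qed

text \<open>The cost of the switching strategy when the \<open>G'\<close>-play exits: after the bridge the play
  continues as a play of the near-optimal \<open>m2 l\<close>, so the cost exceeds the \<open>G'\<close>-cost by at most \<open>\<epsilon>\<close>.\<close>

lemma switch_exit_cost:
  assumes chi: "max_strat G e2 s chi" and legal_sw: "legal_play G e2 s (switch_strat m' m2) chi"
    and pK: "pos G e2 s (lower m') chi K = (l, y)"
    and m2: "min_strat G e2 (l, r) (m2 l)"
      "\<And>c. max_strat G e2 (l, r) c \<Longrightarrow> cost G e2 (l, r) (m2 l) c < ereal (V l + \<epsilon>)"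
  shows "cost G e2 s (switch_strat m' m2) chi \<le> cost G' r (inl_st s) m' (lift chi) + ereal \<epsilon>"
proof -
  let ?mu = "switch_strat m' m2" and ?p = "pos G e2 s (lower m') chi"
  obtain k H0 where B: "bridge ?p K k H0" and E: "entry G e2 (Lmax G) (l, r) H0"
    and after: "\<And>t. ?mu (hist G e2 s (lower m') chi k @ t) = m2 l (H0 @ t)"
    and nsw: "\<And>i. i < k \<Longrightarrow> \<not> switched m' (hist G e2 s (lower m') chi i)"
    using switch_at_exit[of m2] pK by auto
  have agree_hist: "hist G e2 s ?mu chi n = hist G e2 s (lower m') chi n" if "n \<le> k" for n
    by (rule switch_strat_agrees) (use nsw that in auto)
  have agree: "pos G e2 s ?mu chi i = ?p i" if "i \<le> k" for i
    using agree_hist[OF that] by (simp add: pos_def)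
  have ok: "\<not> at_goal G (pos G e2 s ?mu chi i) \<and> enabled G e2 (pos G e2 s ?mu chi i)" if "i \<le> K" for i
    using exit_ok[OF that] agree[of i] B that by (auto simp: bridge_def)
  have "cost G e2 s ?mu chi \<le>
      ereal (V l + (r - y) * real (rate G l) + price_upto G (pos G e2 s ?mu chi) K) + ereal \<epsilon>"
  proof (rule min_continuation[OF chi legal_sw _ E _ ok _ m2])
    show "bridge (pos G e2 s ?mu chi) K k H0" using bridge_cong[OF B agree] .
    show "pos G e2 s ?mu chi K = (l, y)" using agree[of K] B pK by (simp add: bridge_def)
    show "?mu (hist G e2 s ?mu chi k @ t) = m2 l (H0 @ t)" for t using after agree_hist[of k] by simp
  qed
  moreover have "price_upto G (pos G e2 s ?mu chi) K = price_upto G ?p K"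
    by (rule price_upto_cong) (use agree B in \<open>auto simp: bridge_def\<close>)
  ultimately show ?thesis using exit_cost(3)[OF X legal' s_le pK] by simp
qed
end

lemma switch_reply:
  assumes s: "fst s \<in> locs G" "snd s \<le> r" and mu': "min_strat G' r (inl_st s) m'" and eps: "0 < \<epsilon>"
    and m2: "\<And>l. l \<in> locs G \<Longrightarrow> min_strat G e2 (l, r) (m2 l)"
      "\<And>l c. l \<in> locs G \<Longrightarrow> max_strat G e2 (l, r) c \<Longrightarrow> cost G e2 (l, r) (m2 l) c < ereal (V l + \<epsilon>)"
    and m2v: "\<And>l. valid_strat G e2 (Lmin G) (m2 l)"
    and chi: "max_strat G e2 s chi"
  shows "cost G e2 s (switch_strat m' m2) chi \<le> cost G' r (inl_st s) m' (lift chi) + ereal \<epsilon>"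
proof -
  let ?mu = "switch_strat m' m2" and ?mu1 = "lower m'"
  let ?p = "pos G e2 s ?mu1 chi" and ?p' = "pos G' r (inl_st s) m' (lift chi)"
  have chiv: "valid_strat G e2 (Lmax G) chi" using chi by (simp add: max_strat_def)
  have legal1: "legal_play G e2 s ?mu1 chi" using lower_valid chiv s(1) by (rule legal_play_G)
  have legal: "legal_play G e2 s ?mu chi" using switch_strat_valid[OF m2v] chiv s(1) by (rule legal_play_G)
  have legal': "legal_play G' r (inl_st s) m' (lift chi)"
    using mu' lift_valid s(1) by (simp add: min_strat_def legal_play_G')
  have corr: "corresp ?mu1 m'" "corresp chi (lift chi)" by (simp_all add: corresp_def)
  note first_event = corresp_first_event[OF corr legal1 legal' s(2)]
  show ?thesis
  proof (cases "\<forall>i. \<not> at_goal G (?p i) \<and> \<not> at_goal G' (?p' i)")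
    case True
    then have "cost G' r (inl_st s) m' (lift chi) = \<infinity>" by (simp add: cost_play_cost play_cost_none)
    then show ?thesis by simp
  next
    case False
    then obtain K
      where H: "\<forall>n\<le>K. hist G' r (inl_st s) m' (lift chi) n = map inl_st (hist G e2 s ?mu1 chi n)"
      and before: "\<forall>i<K. \<not> at_goal G (?p i) \<and> enabled G e2 (?p i) \<and> isl (fst (?p' (Suc i)))"
      and event: "at_goal G (?p K) \<or> exits_at s ?mu1 chi m' (lift chi) K"
      using first_event by blast
    from event show ?thesis
    proof
      assume g: "at_goal G (?p K)"
      have PK: "?p' i = inl_st (?p i)" if "i \<le> K" for i using H that by (simp add: pos_map_inl_st)
      have agree: "pos G e2 s ?mu chi i = ?p i" if "i \<le> K" for i
      proof -
        have "hist G e2 s ?mu chi i = hist G e2 s ?mu1 chi i"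
          by (rule switch_strat_agrees) (use not_switched_before[OF legal1 legal' s(2) H before] that in auto)
        then show ?thesis by (simp add: pos_def)
      qed
      have "play_cost G (pos G e2 s ?mu chi) = play_cost G ?p"
        by (rule play_cost_cong[where n=K]) (use agree g in auto)
      moreover have "play_cost G' ?p' = play_cost G ?p"
        by (rule play_cost_cong[where n=K]) (use PK g in auto)
      ultimately show ?thesis
        using eps by (cases "cost G e2 s ?mu chi") (simp_all add: cost_play_cost cost_not_minf)
    next
      assume X: "exits_at s ?mu1 chi m' (lift chi) K"
      obtain l y where pK: "?p K = (l, y)" by (cases "?p K")
      have l: "l \<in> locs G" using legal_play.pos_loc[OF legal1, of K] pK by simp
      show ?thesis
        by (rule switch_exit_cost[OF legal1 legal' s(2) X before chi legal pK m2(1)[OF l] m2(2)[OF l]])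
    qed
  qed
qed

lemma OptCost_G_le:
  assumes s: "fst s \<in> locs G" "snd s \<le> r"
  shows "OptCost G b e2 s \<le> OptCost G' b' r (inl_st s)"
  unfolding OptCost_def[of G' b' r]
proof (rule INF_greatest)
  fix m' assume "m' \<in> {m'. min_strat G' r (inl_st s) m'}"
  then have mu': "min_strat G' r (inl_st s) m'" by simp
  let ?sup = "SUP c'\<in>{c. max_strat G' r (inl_st s) c}. cost G' r (inl_st s) m' c'"
  show "OptCost G b e2 s \<le> ?sup"
  proof (rule ereal_le_epsilon2)
    fix \<epsilon> :: real assume eps: "0 < \<epsilon>"
    define m2 where "m2 l = (if l \<in> locs G then (SOME m. min_strat G e2 (l, r) m \<and>
        (\<forall>c. max_strat G e2 (l, r) c \<longrightarrow> cost G e2 (l, r) m c < ereal (V l + \<epsilon>))) else delay_strat G e2)" for l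
    have m2: "min_strat G e2 (l, r) (m2 l) \<and>
        (\<forall>c. max_strat G e2 (l, r) c \<longrightarrow> cost G e2 (l, r) (m2 l) c < ereal (V l + \<epsilon>))"
      if "l \<in> locs G" for l
      using someI_ex[OF near_optimal_strategy[OF that eps]] that by (simp add: m2_def)
    have m2v: "valid_strat G e2 (Lmin G) (m2 l)" for l
      using m2[of l] delay_strat_valid by (cases "l \<in> locs G") (auto simp: m2_def min_strat_def)
    let ?mu = "switch_strat m' m2"
    have mu: "min_strat G e2 s ?mu" by (rule switch_strat_min[OF mu' s]) (use m2 m2v in auto)
    have "OptCost G b e2 s \<le> (SUP chi\<in>{chi. max_strat G e2 s chi}. cost G e2 s ?mu chi)"
      unfolding OptCost_def by (rule INF_lower) (simp add: mu)
    also have "\<dots> \<le> ?sup + ereal \<epsilon>"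
    proof (rule SUP_least)
      fix chi assume "chi \<in> {chi. max_strat G e2 s chi}"
      then have chi: "max_strat G e2 s chi" by simp
      have "cost G e2 s ?mu chi \<le> cost G' r (inl_st s) m' (lift chi) + ereal \<epsilon>"
        by (rule switch_reply[OF s mu' eps _ _ m2v chi]) (use m2 in auto)
      moreover have "cost G' r (inl_st s) m' (lift chi) \<le> ?sup"
        by (rule SUP_upper) (simp add: lift_max[OF chi s])
      ultimately show "cost G e2 s ?mu chi \<le> ?sup + ereal \<epsilon>"
        by (simp add: add_right_mono order_trans)
    qed
    finally show "OptCost G b e2 s \<le> ?sup + ereal \<epsilon>" .
  qed
qed

lemma OptCost_G'_eq:
  assumes "l \<in> locs G" "x \<le> r"
  shows "OptCost G' b r (Inl l, x) = OptCost G b e2 (l, x)"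
  using OptCost_G_le[of "(l, x)" b b] OptCost_G'_le[of "(l, x)" b b] assms
  by (simp add: inl_st_def)

end

lemma OptCost_left_endpoint: "OptCost G b e s = OptCost G b' e s"
  by (simp add: OptCost_def)

theorem lemma2:
  fixes G :: "'l game" and b1 r e2 :: real
  assumes "simple_game G"
    and "0 \<le> b1" "b1 \<le> r" "r \<le> e2" "e2 \<le> 1"
    and finite_opt: "\<And>b e l x. 0 \<le> b \<Longrightarrow> b \<le> e \<Longrightarrow> e \<le> 1 \<Longrightarrow> l \<in> locs G \<Longrightarrow> x \<in> {b..e} \<Longrightarrow>
                    \<bar>OptCost G b e (l, x)\<bar> \<noteq> \<infinity>"
  shows "\<forall>l \<in> locs G. \<forall>x \<in> {b1..r} \<union> {r..e2}.
           override (locs G \<times> {b1..r})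
             (\<lambda>(l', x'). OptCost (cost_consistent G r e2) b1 r (Inl l', x'))
             (OptCost G r e2) (l, x)
           = OptCost G b1 e2 (l, x)"
proof -
  interpret split_game G r e2
  proof
    show "edges G \<subseteq> locs G \<times> locs G" "Lmin G \<inter> Lmax G = {}"
      using assms(1) by (simp_all add: simple_game_def)
    show "\<bar>OptCost G r e2 (l, r)\<bar> \<noteq> \<infinity>" if "l \<in> locs G" for l
      using finite_opt[of r e2 l r] that assms(2-5) by simp
  qed (rule assms(4))
  show ?thesis
  proof (intro ballI)
    fix l x assume l: "l \<in> locs G" and "x \<in> {b1..r} \<union> {r..e2}"
    show "override (locs G \<times> {b1..r}) (\<lambda>(l', x'). OptCost (cost_consistent G r e2) b1 r (Inl l', x'))
        (OptCost G r e2) (l, x) = OptCost G b1 e2 (l, x)"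
      using OptCost_G'_eq[OF l, of x b1] OptCost_left_endpoint[of G r e2 "(l, x)" b1] l
      by (auto simp: override_def G'_def)
  qed
qed

end
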